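(* Assume (A1) and (A2) and let $\ell_n=n^s$ with $s\in(0,1)$. Then (with no null hypothesis assumed) $$\Big|\hat\sigma_H^2-\int_0^1\sigma^2(z)\,dz\Big|\xrightarrow{P}0\qquad(n\to\infty).$$
   Context: Let $(Y_i)_{i\in\mathbb N}$ be a strictly stationary real-valued process with $E[Y_1]=0$, $\mathrm{Var}(Y_1)=1$, which is absolutely regular, i.e. $\beta_Y(k):=\sup_{m\in\mathbb N}\beta\big(\sigma(Y_i,1\le i\le m),\sigma(Y_i,i\ge k+m)\big)\to0$ as $k\to\infty$, where $\beta(\mathcal A,\mathcal B)=E\big[\operatorname{ess\,sup}_{A\in\mathcal A}|P(A\mid\mathcal B)-P(A)|\big]$. Let $\mu:[0,1]\to\mathbb R$ be Lipschitz-continuous and $\sigma:[0,1]\to[\sigma_0,\infty)$ be càdlàg for some constant $\sigma_0>0$. The observations are $X_i=\sigma(i/n)Y_i+\mu(i/n)$, $1\le i\le n$. The block length is $\ell_n=n^s$ and $b_n=n/\ell_n$ (integers). Define $\tilde X_i=X_i-\frac1{\ell_n}\sum_{r=(j-1)\ell_n+1}^{j\ell_n}X_r$ for $i\in\{(j-1)\ell_n+1,\dots,j\ell_n\}$ and $\hat\sigma_H^2=\frac1n\sum_{i=1}^n\tilde X_i^2$. Assumptions: (A1) there is $\vartheta>0$ with $E|Y_1|^{4+2\vartheta}<\infty$; (A2) for the same $\vartheta$, $\sum_{k=1}^\infty\beta_Y(k)^{\vartheta/(2+\vartheta)}<\infty$. *)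

theory Defs
  imports "HOL-Probability.Probability"
begin

definition ess_sup_family :: "'a measure \<Rightarrow> ('a \<Rightarrow> real) set \<Rightarrow> ('a \<Rightarrow> real)" where
  "ess_sup_family M F = (SOME g. g \<in> borel_measurable M
      \<and> (\<forall>f\<in>F. AE x in M. f x \<le> g x)
      \<and> (\<forall>h\<in>borel_measurable M. (\<forall>f\<in>F. AE x in M. f x \<le> h x) \<longrightarrow> (AE x in M. g x \<le> h x)))"

definition gen_sigma :: "'a measure \<Rightarrow> (nat \<Rightarrow> 'a \<Rightarrow> real) \<Rightarrow> nat set \<Rightarrow> 'a measure" where
  "gen_sigma M Y I = sigma (space M) {Y i -` B \<inter> space M | i B. i \<in> I \<and> B \<in> sets borel}"

definition beta_coef :: "'a measure \<Rightarrow> 'a measure \<Rightarrow> 'a measure \<Rightarrow> real" where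
  "beta_coef M MA MB = integral\<^sup>L M (ess_sup_family M
      {(\<lambda>x. \<bar>real_cond_exp M MB (indicator A) x - measure M A\<bar>) | A. A \<in> sets MA})"

definition beta_Y :: "'a measure \<Rightarrow> (nat \<Rightarrow> 'a \<Rightarrow> real) \<Rightarrow> nat \<Rightarrow> real" where
  "beta_Y M Y k = (SUP m\<in>{1::nat..}. beta_coef M (gen_sigma M Y {1..m}) (gen_sigma M Y {k+m..}))"

definition strictly_stationary :: "'a measure \<Rightarrow> (nat \<Rightarrow> 'a \<Rightarrow> real) \<Rightarrow> bool" where
  "strictly_stationary M Y = (\<forall>m k.
      distr M (PiM {1..m} (\<lambda>_. borel)) (\<lambda>\<omega>. \<lambda>i\<in>{1..m}. Y (i + k) \<omega>)
    = distr M (PiM {1..m} (\<lambda>_. borel)) (\<lambda>\<omega>. \<lambda>i\<in>{1..m}. Y i \<omega>))"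

definition cadlag01 :: "(real \<Rightarrow> real) \<Rightarrow> bool" where
  "cadlag01 f = ((\<forall>x\<in>{0..<1}. continuous (at_right x) f)
               \<and> (\<forall>x\<in>{0<..1}. \<exists>L. (f \<longlongrightarrow> L) (at_left x)))"

text \<open>Block length l_n = n^s (used only for n where n^s is an integer dividing n).\<close>
definition blk :: "real \<Rightarrow> nat \<Rightarrow> nat" where
  "blk s n = nat \<lfloor>real n powr s\<rfloor>"

definition obs :: "(real \<Rightarrow> real) \<Rightarrow> (real \<Rightarrow> real) \<Rightarrow> (nat \<Rightarrow> 'a \<Rightarrow> real) \<Rightarrow> nat \<Rightarrow> nat \<Rightarrow> 'a \<Rightarrow> real" where
  "obs sig mu Y n i \<omega> = sig (real i / real n) * Y i \<omega> + mu (real i / real n)"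

definition demeaned :: "(real \<Rightarrow> real) \<Rightarrow> (real \<Rightarrow> real) \<Rightarrow> (nat \<Rightarrow> 'a \<Rightarrow> real) \<Rightarrow> real \<Rightarrow> nat \<Rightarrow> nat \<Rightarrow> 'a \<Rightarrow> real" where
  "demeaned sig mu Y s n i \<omega> = (let l = blk s n; j = (i - 1) div l + 1 in
      obs sig mu Y n i \<omega> - (1 / real l) * (\<Sum>r = (j - 1) * l + 1 .. j * l. obs sig mu Y n r \<omega>))"

definition sigmaH2 :: "(real \<Rightarrow> real) \<Rightarrow> (real \<Rightarrow> real) \<Rightarrow> (nat \<Rightarrow> 'a \<Rightarrow> real) \<Rightarrow> real \<Rightarrow> nat \<Rightarrow> 'a \<Rightarrow> real" where
  "sigmaH2 sig mu Y s n \<omega> = (1 / real n) * (\<Sum>i = 1..n. (demeaned sig mu Y s n i \<omega>)^2)"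

end

theory Submission
  imports Defs
begin

text \<open>
  Since \<open>\<sigma>(i/n) Y\<^sub>i = X\<^sub>i - \<mu>(i/n)\<close>, the estimator differs from the known-trend estimator
  \<open>T\<^sub>n = n\<^sup>-\<^sup>1 \<Sum>\<^sub>i (\<sigma>(i/n) Y\<^sub>i)\<^sup>2\<close> only through the errors \<open>v\<^sub>i\<close> between the demeaned
  observations and \<open>\<sigma>(i/n) Y\<^sub>i\<close>, and \<open>\<bar>a\<^sup>2 - b\<^sup>2\<bar> \<le> \<eta> b\<^sup>2 + (1 + 1/\<eta>) (a - b)\<^sup>2\<close> reduces the
  claim to moment bounds. \<open>E T\<^sub>n\<close> is a Riemann sum of \<open>\<sigma>\<^sup>2\<close>, and \<open>E (T\<^sub>n - E T\<^sub>n)\<^sup>2\<close> is bounded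
  by a Cesaro mean of the autocovariances of \<open>Y\<^sub>i\<^sup>2 - 1\<close>. Each \<open>v\<^sub>i\<close> is the oscillation of \<open>\<mu>\<close>
  over a block, at most \<open>Lip(\<mu>) \<ell>\<^sub>n / n\<close>, plus a block mean of the \<open>\<sigma>(r/n) Y\<^sub>r\<close>, whose second
  moment is a Cesaro mean of the autocovariances of \<open>Y\<^sub>i\<close> over \<open>\<ell>\<^sub>n\<close> lags. Both
  autocovariance sequences tend to zero by the covariance inequality
  \<open>\<bar>Cov(h(Y\<^sub>1), g(Y\<^sub>k\<^sub>+\<^sub>1))\<bar> \<le> 2 sup\<bar>h\<bar> sup\<bar>g\<bar> \<beta>\<^sub>Y(k)\<close> for bounded \<open>h, g\<close>, extended to
  square-integrable functions by truncation; Markov's inequality concludes.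
\<close>

section \<open>Riemann sums of cadlag functions\<close>

lemma has_integral_ceiling_step:
  fixes f :: "real \<Rightarrow> real"
  assumes "n \<ge> 1" "k \<le> n"
  shows "((\<lambda>z. f (\<lceil>real n * z\<rceil> / real n)) has_integral (\<Sum>i=1..k. f (real i / real n)) / real n)
           {0..real k / real n}"
  using assms(2)
proof (induction k)
  case 0
  then show ?case using has_integral_refl(2)[of _ "0::real"] by simp
next
  case (Suc k)
  let ?g = "\<lambda>z. f (\<lceil>real n * z\<rceil> / real n)"
  have n: "real n > 0" using assms(1) by simp
  have "((\<lambda>z. f (real (Suc k) / real n)) has_integral f (real (Suc k) / real n) / real n)
      {real k / real n..real (Suc k) / real n}"
    using has_integral_const_real[of "f (real (Suc k) / real n)" "real k / real n" "real (Suc k) / real n"] n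
    by (simp add: divide_simps)
  then have last: "(?g has_integral f (real (Suc k) / real n) / real n) {real k / real n..real (Suc k) / real n}"
  proof (rule has_integral_spike_finite[rotated 2, where S="{real k / real n}"])
    fix z assume "z \<in> {real k / real n..real (Suc k) / real n} - {real k / real n}"
    then have "real k < real n * z" "real n * z \<le> real (Suc k)"
      using n by (auto simp: field_simps)
    then have "\<lceil>real n * z\<rceil> = int (Suc k)"
      by (intro ceiling_unique) auto
    then show "?g z = f (real (Suc k) / real n)" by simp
  qed simp
  have "(?g has_integral (\<Sum>i=1..k. f (real i / real n)) / real n + f (real (Suc k) / real n) / real n)
      {0..real (Suc k) / real n}"
    by (rule has_integral_combine[OF _ _ Suc.IH[OF Suc_leD[OF Suc.prems]] last])
      (use n in \<open>auto simp: divide_simps\<close>)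
  then show ?case by (simp add: add_divide_distrib)
qed

lemma ceiling_grid_tendsto:
  fixes f :: "real \<Rightarrow> real"
  assumes "continuous (at_right z) f"
  shows "(\<lambda>n. f (\<lceil>real (Suc n) * z\<rceil> / real (Suc n))) \<longlonglongrightarrow> f z"
proof (rule LIMSEQ_I)
  fix r :: real assume r: "r > 0"
  have "(f \<longlongrightarrow> f z) (at_right z)" using assms by (simp add: continuous_within)
  then have "eventually (\<lambda>y. dist (f y) (f z) < r) (at_right z)"
    using r tendstoD by blast
  then obtain b where b: "b > z" "\<And>y. z < y \<Longrightarrow> y < b \<Longrightarrow> dist (f y) (f z) < r"
    unfolding eventually_at_right_field by blast
  obtain N :: nat where N: "1 / (b - z) < real N" using reals_Archimedean2 by blast
  show "\<exists>N. \<forall>n\<ge>N. norm (f (\<lceil>real (Suc n) * z\<rceil> / real (Suc n)) - f z) < r"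
  proof (intro exI allI impI)
    fix n assume n: "n \<ge> N"
    define y where "y = \<lceil>real (Suc n) * z\<rceil> / real (Suc n)"
    have "z \<le> y" unfolding y_def by (simp add: field_simps)
    have "\<lceil>real (Suc n) * z\<rceil> < real (Suc n) * z + 1" by linarith
    then have "y < (real (Suc n) * z + 1) / real (Suc n)"
      unfolding y_def by (intro divide_strict_right_mono) auto
    then have "y < z + 1 / real (Suc n)" by (simp add: add_divide_distrib)
    moreover have "1 / real (Suc n) < b - z"
    proof -
      have "1 < (b - z) * real N" using N b(1) by (simp add: field_simps)
      also have "\<dots> \<le> (b - z) * real (Suc n)" using n b(1) by (intro mult_left_mono) auto
      finally show ?thesis by (simp add: field_simps)
    qed
    ultimately have "y < b" by simp
    with \<open>z \<le> y\<close> have "\<bar>f y - f z\<bar> < r"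
      using b(2)[of y] r by (cases "y = z") (auto simp: dist_real_def)
    then show "norm (f y - f z) < r" by simp
  qed
qed

text \<open>The Riemann sums with right end points are the integrals of the step functions
  \<open>f (\<lceil>n z\<rceil> / n)\<close>, which converge pointwise to \<open>f\<close> by right continuity.\<close>

lemma riemann_sum_tendsto_integral:
  fixes f :: "real \<Rightarrow> real"
  assumes bounded: "\<And>z. z \<in> {0..1} \<Longrightarrow> \<bar>f z\<bar> \<le> B"
    and right_cont: "\<And>z. z \<in> {0..<1} \<Longrightarrow> continuous (at_right z) f"
  shows "(\<lambda>n. (\<Sum>i=1..n. f (real i / real n)) / real n) \<longlonglongrightarrow> integral {0..1} f"
proof -
  define g where "g n z = f (\<lceil>real (Suc n) * z\<rceil> / real (Suc n))" for n z
  have g_integral: "(g n has_integral (\<Sum>i=1..Suc n. f (real i / real (Suc n))) / real (Suc n)) {0..1}" for n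
    using has_integral_ceiling_step[of "Suc n" "Suc n" f] unfolding g_def by simp
  have grid_point: "\<lceil>real (Suc n) * z\<rceil> / real (Suc n) \<in> {0..1}" if "z \<in> {0..1}" for n z
  proof -
    have "0 \<le> real (Suc n) * z" "real (Suc n) * z \<le> real (Suc n)" using that by auto
    then have "0 \<le> \<lceil>real (Suc n) * z\<rceil>" "\<lceil>real (Suc n) * z\<rceil> \<le> int (Suc n)"
      by (simp_all add: ceiling_le_iff)
    then show ?thesis by (simp add: divide_le_eq)
  qed
  have g_bounded: "norm (g n z) \<le> B" if "z \<in> {0..1}" for n z
    using bounded[OF grid_point[OF that]] unfolding g_def by simp
  have g_tendsto: "(\<lambda>n. g n z) \<longlonglongrightarrow> f z" if "z \<in> {0..1}" for z
  proof (cases "z = 1")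
    case True
    then show ?thesis by (simp add: g_def)
  next
    case False
    with that show ?thesis unfolding g_def by (intro ceiling_grid_tendsto right_cont) auto
  qed
  have "(\<lambda>n. integral {0..1} (g n)) \<longlonglongrightarrow> integral {0..1} f"
    by (rule dominated_convergence(2)[OF _ _ g_bounded g_tendsto])
      (use g_integral in blast)+
  moreover have "integral {0..1} (g n) = (\<Sum>i=1..Suc n. f (real i / real (Suc n))) / real (Suc n)" for n
    using g_integral by (rule integral_unique)
  ultimately have "(\<lambda>n. (\<Sum>i=1..Suc n. f (real i / real (Suc n))) / real (Suc n)) \<longlonglongrightarrow> integral {0..1} f"
    by simp
  then show ?thesis by (rule LIMSEQ_imp_Suc)
qed

lemma cadlag01_locally_bounded:
  assumes "cadlag01 f" and x: "x \<in> {0..1}"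
  shows "\<exists>d>0. \<exists>C. \<forall>y\<in>{0..1}. \<bar>y - x\<bar> < d \<longrightarrow> \<bar>f y\<bar> \<le> C"
proof -
  obtain d1 C1 where d1: "d1 > 0" "\<And>y. x < y \<Longrightarrow> y < x + d1 \<Longrightarrow> y \<le> 1 \<Longrightarrow> \<bar>f y\<bar> \<le> C1"
  proof (cases "x < 1")
    case True
    then have "(f \<longlongrightarrow> f x) (at_right x)"
      using assms x unfolding cadlag01_def by (auto simp: continuous_within)
    then have "eventually (\<lambda>y. dist (f y) (f x) < 1) (at_right x)"
      using tendstoD by fastforce
    then obtain b where b: "b > x" "\<And>y. x < y \<Longrightarrow> y < b \<Longrightarrow> dist (f y) (f x) < 1"
      unfolding eventually_at_right_field by blast
    have "\<bar>f y\<bar> \<le> \<bar>f x\<bar> + 1" if "x < y" "y < b" for y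
      using b(2)[OF that] by (simp add: dist_real_def)
    with b(1) show ?thesis by (intro that[of "b - x" "\<bar>f x\<bar> + 1"]) auto
  next
    case False
    with x show ?thesis using that[of 1 0] by auto
  qed
  obtain d2 C2 where d2: "d2 > 0" "\<And>y. x - d2 < y \<Longrightarrow> y < x \<Longrightarrow> 0 \<le> y \<Longrightarrow> \<bar>f y\<bar> \<le> C2"
  proof (cases "x > 0")
    case True
    have "\<exists>L. (f \<longlongrightarrow> L) (at_left x)"
      using assms x True unfolding cadlag01_def by auto
    then obtain L where "(f \<longlongrightarrow> L) (at_left x)" ..
    then have "eventually (\<lambda>y. dist (f y) L < 1) (at_left x)"
      using tendstoD by fastforce
    then obtain b where b: "b < x" "\<And>y. b < y \<Longrightarrow> y < x \<Longrightarrow> dist (f y) L < 1"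
      unfolding eventually_at_left_field by blast
    have "\<bar>f y\<bar> \<le> \<bar>L\<bar> + 1" if "b < y" "y < x" for y
      using b(2)[OF that] by (simp add: dist_real_def)
    with b(1) show ?thesis by (intro that[of "x - b" "\<bar>L\<bar> + 1"]) auto
  next
    case False
    with x show ?thesis using that[of 1 0] by auto
  qed
  have "\<forall>y\<in>{0..1}. \<bar>y - x\<bar> < min d1 d2 \<longrightarrow> \<bar>f y\<bar> \<le> max (max C1 C2) \<bar>f x\<bar>"
  proof (intro ballI impI)
    fix y :: real assume "y \<in> {0..1}" "\<bar>y - x\<bar> < min d1 d2"
    then show "\<bar>f y\<bar> \<le> max (max C1 C2) \<bar>f x\<bar>"
      using d1(2)[of y] d2(2)[of y] by (cases y x rule: linorder_cases) auto
  qed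
  moreover have "min d1 d2 > 0" using d1(1) d2(1) by simp
  ultimately show ?thesis by blast
qed

lemma cadlag01_bounded:
  assumes "cadlag01 f"
  obtains B where "\<And>z. z \<in> {0..1} \<Longrightarrow> \<bar>f z\<bar> \<le> B"
proof -
  obtain d C where dC: "\<And>x. x \<in> {0..1} \<Longrightarrow> d x > 0"
    "\<And>x y. x \<in> {0..1} \<Longrightarrow> y \<in> {0..1} \<Longrightarrow> \<bar>y - x\<bar> < d x \<Longrightarrow> \<bar>f y\<bar> \<le> C x"
    using cadlag01_locally_bounded[OF assms] by metis
  have "{0..1} \<subseteq> (\<Union>x\<in>{0..1}. ball x (d x))"
  proof
    fix z :: real assume "z \<in> {0..1}"
    then have "z \<in> ball z (d z)" using dC(1) by simp
    with \<open>z \<in> {0..1}\<close> show "z \<in> (\<Union>x\<in>{0..1}. ball x (d x))" by blast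
  qed
  then obtain T where T: "T \<subseteq> {0..1}" "finite T" "{0..1} \<subseteq> (\<Union>x\<in>T. ball x (d x))"
    by (rule compactE_image[OF compact_Icc open_ball])
  show ?thesis
  proof
    fix z :: real assume z: "z \<in> {0..1}"
    then obtain x where x: "x \<in> T" "z \<in> ball x (d x)" using T by auto
    then have "\<bar>f z\<bar> \<le> C x" using dC(2)[of x z] T z by (auto simp: dist_real_def abs_minus_commute)
    also have "\<dots> \<le> Max (C ` T)" using T x by auto
    finally show "\<bar>f z\<bar> \<le> Max (C ` T)" .
  qed
qed

section \<open>Covariances\<close>

lemma abs_mult_le:
  fixes u v a b :: real
  assumes "\<bar>u\<bar> \<le> a" "\<bar>v\<bar> \<le> b"
  shows "\<bar>u * v\<bar> \<le> a * b"
  unfolding abs_mult using assms by (intro mult_mono) auto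

lemma young_ineq:
  fixes x y t :: real
  assumes "t > 0"
  shows "\<bar>x * y\<bar> \<le> (t * x\<^sup>2 + y\<^sup>2 / t) / 2"
proof -
  have "0 \<le> (t * \<bar>x\<bar> - \<bar>y\<bar>)\<^sup>2 / t" using assms by simp
  also have "\<dots> = t * x\<^sup>2 - 2 * \<bar>x * y\<bar> + y\<^sup>2 / t"
    using assms by (simp add: power2_eq_square field_simps abs_mult)
  finally show ?thesis by simp
qed

lemma square_add_le: "((x::real) + y)\<^sup>2 \<le> 2 * x\<^sup>2 + 2 * y\<^sup>2"
  using zero_le_power2[of "x - y"] by (simp add: power2_eq_square algebra_simps)

definition covar :: "'a measure \<Rightarrow> ('a \<Rightarrow> real) \<Rightarrow> ('a \<Rightarrow> real) \<Rightarrow> real" where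
  "covar M f g = integral\<^sup>L M (\<lambda>x. f x * g x) - integral\<^sup>L M f * integral\<^sup>L M g"

context prob_space
begin

lemma integrable_bounded:
  fixes f :: "'a \<Rightarrow> real"
  assumes "f \<in> borel_measurable M" "\<And>x. x \<in> space M \<Longrightarrow> \<bar>f x\<bar> \<le> B"
  shows "integrable M f"
  by (rule integrable_const_bound[where B=B]) (use assms in auto)

lemma integrable_mult_bounded:
  fixes f g :: "'a \<Rightarrow> real"
  assumes "f \<in> borel_measurable M" "g \<in> borel_measurable M" "\<And>x. \<bar>f x\<bar> \<le> a" "\<And>x. \<bar>g x\<bar> \<le> b"
  shows "integrable M (\<lambda>x. f x * g x)"
  using assms by (intro integrable_bounded[where B="a * b"] abs_mult_le) auto

lemma abs_integral_le_integral:
  fixes f g :: "'a \<Rightarrow> real"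
  assumes "integrable M f" "integrable M g" "\<And>x. x \<in> space M \<Longrightarrow> \<bar>f x\<bar> \<le> g x"
  shows "\<bar>integral\<^sup>L M f\<bar> \<le> integral\<^sup>L M g"
proof -
  have "\<bar>integral\<^sup>L M f\<bar> \<le> integral\<^sup>L M (\<lambda>x. \<bar>f x\<bar>)"
    using integral_norm_bound[of M f] by simp
  also have "\<dots> \<le> integral\<^sup>L M g"
    using assms by (intro integral_mono) auto
  finally show ?thesis .
qed

lemma abs_integral_le_const:
  fixes f :: "'a \<Rightarrow> real"
  assumes "integrable M f" "\<And>x. x \<in> space M \<Longrightarrow> \<bar>f x\<bar> \<le> B"
  shows "\<bar>integral\<^sup>L M f\<bar> \<le> B"
  using abs_integral_le_integral[OF assms(1) integrable_const assms(2)] by (simp add: prob_space)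

lemma integrable_mult_square_integrable:
  fixes f g :: "'a \<Rightarrow> real"
  assumes "f \<in> borel_measurable M" "g \<in> borel_measurable M"
    and "integrable M (\<lambda>x. (f x)\<^sup>2)" "integrable M (\<lambda>x. (g x)\<^sup>2)"
  shows "integrable M (\<lambda>x. f x * g x)"
proof (rule Bochner_Integration.integrable_bound[of _ "\<lambda>x. ((f x)\<^sup>2 + (g x)\<^sup>2) / 2"])
  show "AE x in M. norm (f x * g x) \<le> norm (((f x)\<^sup>2 + (g x)\<^sup>2) / 2)"
    using young_ineq[of 1] by simp
qed (use assms in auto)

lemma abs_integral_mult_le:
  fixes f g :: "'a \<Rightarrow> real"
  assumes "f \<in> borel_measurable M" "g \<in> borel_measurable M"
    and "integrable M (\<lambda>x. (f x)\<^sup>2)" "integrable M (\<lambda>x. (g x)\<^sup>2)" and "t > 0"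
  shows "\<bar>integral\<^sup>L M (\<lambda>x. f x * g x)\<bar>
    \<le> (t * integral\<^sup>L M (\<lambda>x. (f x)\<^sup>2) + integral\<^sup>L M (\<lambda>x. (g x)\<^sup>2) / t) / 2"
proof -
  have "\<bar>integral\<^sup>L M (\<lambda>x. f x * g x)\<bar> \<le> integral\<^sup>L M (\<lambda>x. \<bar>f x * g x\<bar>)"
    using integral_norm_bound[of M "\<lambda>x. f x * g x"] by simp
  also have "\<dots> \<le> integral\<^sup>L M (\<lambda>x. (t * (f x)\<^sup>2 + (g x)\<^sup>2 / t) / 2)"
    using assms integrable_mult_square_integrable[OF assms(1-4)]
    by (intro integral_mono young_ineq) auto
  also have "\<dots> = (t * integral\<^sup>L M (\<lambda>x. (f x)\<^sup>2) + integral\<^sup>L M (\<lambda>x. (g x)\<^sup>2) / t) / 2"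
    using assms by simp
  finally show ?thesis .
qed

lemma square_integral_le:
  fixes f :: "'a \<Rightarrow> real"
  assumes "f \<in> borel_measurable M" "integrable M (\<lambda>x. (f x)\<^sup>2)"
  shows "(integral\<^sup>L M f)\<^sup>2 \<le> integral\<^sup>L M (\<lambda>x. (f x)\<^sup>2)"
  using variance_eq[of f] variance_positive[of f] square_integrable_imp_integrable[OF assms] assms
  by simp

lemma abs_covar_le:
  fixes f g :: "'a \<Rightarrow> real"
  assumes "f \<in> borel_measurable M" "g \<in> borel_measurable M"
    and "integrable M (\<lambda>x. (f x)\<^sup>2)" "integrable M (\<lambda>x. (g x)\<^sup>2)" and "t > 0"
  shows "\<bar>covar M f g\<bar> \<le> t * integral\<^sup>L M (\<lambda>x. (f x)\<^sup>2) + integral\<^sup>L M (\<lambda>x. (g x)\<^sup>2) / t"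
proof -
  have "\<bar>integral\<^sup>L M f * integral\<^sup>L M g\<bar> \<le> (t * (integral\<^sup>L M f)\<^sup>2 + (integral\<^sup>L M g)\<^sup>2 / t) / 2"
    using young_ineq[OF assms(5)] .
  also have "\<dots> \<le> (t * integral\<^sup>L M (\<lambda>x. (f x)\<^sup>2) + integral\<^sup>L M (\<lambda>x. (g x)\<^sup>2) / t) / 2"
    using square_integral_le[OF assms(1,3)] square_integral_le[OF assms(2,4)] assms(5)
    by (intro divide_right_mono add_mono mult_left_mono) auto
  finally show ?thesis
    using abs_integral_mult_le[OF assms]
      abs_triangle_ineq4[of "integral\<^sup>L M (\<lambda>x. f x * g x)" "integral\<^sup>L M f * integral\<^sup>L M g"]
    unfolding covar_def by argo
qed

lemma covar_cong:
  "(\<And>x. x \<in> space M \<Longrightarrow> f x = f' x) \<Longrightarrow> covar M f g = covar M f' g"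
  unfolding covar_def by (metis (no_types, lifting) Bochner_Integration.integral_cong)

lemma covar_commute: "covar M f g = covar M g f"
  unfolding covar_def by (simp add: mult.commute)

lemma covar_diff_left:
  assumes "integrable M f" "integrable M f'" "integrable M (\<lambda>x. f x * g x)" "integrable M (\<lambda>x. f' x * g x)"
  shows "covar M (\<lambda>x. f x - f' x) g = covar M f g - covar M f' g"
  using assms unfolding covar_def by (simp add: left_diff_distrib)

lemma covar_add_left:
  assumes "integrable M f" "integrable M f'" "integrable M (\<lambda>x. f x * g x)" "integrable M (\<lambda>x. f' x * g x)"
  shows "covar M (\<lambda>x. f x + f' x) g = covar M f g + covar M f' g"
  using assms unfolding covar_def by (simp add: distrib_right)

lemma covar_divide_left: "covar M (\<lambda>x. f x / c) g = covar M f g / c"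
  unfolding covar_def by (simp add: diff_divide_distrib)

lemma covar_affine_sum_left:
  assumes "integrable M g" "\<And>j. j \<in> J \<Longrightarrow> integrable M (f j)"
    "\<And>j. j \<in> J \<Longrightarrow> integrable M (\<lambda>x. f j x * g x)"
  shows "covar M (\<lambda>x. (a + (\<Sum>j\<in>J. f j x)) / c) g = (\<Sum>j\<in>J. covar M (f j) g) / c"
proof -
  have "covar M (\<lambda>x. a + (\<Sum>j\<in>J. f j x)) g = (\<Sum>j\<in>J. covar M (f j) g)"
    using assms unfolding covar_def
    by (simp add: distrib_right sum_distrib_right sum_subtractf prob_space)
  then show ?thesis by (simp add: covar_divide_left)
qed

lemma abs_covar_le_bounded:
  fixes f g :: "'a \<Rightarrow> real"
  assumes "f \<in> borel_measurable M" "g \<in> borel_measurable M"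
    and "\<And>x. \<bar>f x\<bar> \<le> a" "\<And>x. \<bar>g x\<bar> \<le> b"
  shows "\<bar>covar M f g\<bar> \<le> 2 * a * b"
proof -
  have "\<bar>integral\<^sup>L M (\<lambda>x. f x * g x)\<bar> \<le> a * b"
    using assms by (intro abs_integral_le_const integrable_mult_bounded abs_mult_le) auto
  moreover have "\<bar>integral\<^sup>L M f * integral\<^sup>L M g\<bar> \<le> a * b"
    using assms by (intro abs_mult_le abs_integral_le_const integrable_bounded) auto
  ultimately show ?thesis
    using abs_triangle_ineq4[of "integral\<^sup>L M (\<lambda>x. f x * g x)" "integral\<^sup>L M f * integral\<^sup>L M g"]
    unfolding covar_def by linarith
qed

end

section \<open>Essential suprema and the absolute regularity coefficient\<close>

definition capped_sup :: "(nat \<Rightarrow> 'a \<Rightarrow> real) \<Rightarrow> 'a \<Rightarrow> real" where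
  "capped_sup u x = (SUP i. min 1 (u i x))"

lemma bdd_above_capped: "bdd_above (range (\<lambda>i. min 1 (u i x :: real)))"
  by (rule bdd_aboveI[of _ 1]) auto

lemma capped_sup_upper: "min 1 (u i x) \<le> capped_sup u x"
  unfolding capped_sup_def by (rule cSUP_upper[OF _ bdd_above_capped]) simp

lemma capped_sup_le_1: "capped_sup u x \<le> 1"
  unfolding capped_sup_def by (rule cSUP_least) auto

lemma capped_sup_least: "(\<And>i. min 1 (u i x) \<le> c) \<Longrightarrow> capped_sup u x \<le> c"
  unfolding capped_sup_def by (rule cSUP_least) auto

lemma capped_sup_mono: "(\<And>i. \<exists>j. u i = v j) \<Longrightarrow> capped_sup u x \<le> capped_sup v x"
  by (rule capped_sup_least) (metis capped_sup_upper)

context prob_space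
begin

context
  fixes F :: "('a \<Rightarrow> real) set"
  assumes F_nonempty: "F \<noteq> {}"
    and F_measurable: "\<And>f. f \<in> F \<Longrightarrow> f \<in> borel_measurable M"
    and F_nonneg: "\<And>f x. f \<in> F \<Longrightarrow> 0 \<le> f x"
    and F_le_1: "\<And>f. f \<in> F \<Longrightarrow> AE x in M. f x \<le> 1"
begin

lemma capped_sup_measurable: "(\<And>i. u i \<in> F) \<Longrightarrow> capped_sup u \<in> borel_measurable M"
  unfolding capped_sup_def by (rule borel_measurable_cSUP) (use F_measurable in \<open>auto intro: bdd_above_capped\<close>)

lemma integrable_capped_sup:
  assumes "\<And>i. u i \<in> F"
  shows "integrable M (capped_sup u)"
proof (rule integrable_const_bound[where B=1])
  have "0 \<le> capped_sup u x" for x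
    using capped_sup_upper[of u 0 x] F_nonneg[OF assms, of 0 x] by linarith
  then show "AE x in M. norm (capped_sup u x) \<le> 1"
    using capped_sup_le_1[of u] by simp
qed (use capped_sup_measurable assms in auto)

text \<open>Countably many sequences in \<open>F\<close> merge into one by \<open>prod_decode\<close>, so the
  supremum of the expectations of capped suprema is attained.\<close>

lemma capped_sup_maximizer:
  "\<exists>w. (\<forall>i. w i \<in> F)
     \<and> (\<forall>u. (\<forall>i. u i \<in> F) \<longrightarrow> integral\<^sup>L M (capped_sup u) \<le> integral\<^sup>L M (capped_sup w))"
proof -
  define Q where "Q = {u :: nat \<Rightarrow> 'a \<Rightarrow> real. \<forall>i. u i \<in> F}"
  define S where "S = (SUP u\<in>Q. integral\<^sup>L M (capped_sup u))"
  have Q_nonempty: "Q \<noteq> {}" using F_nonempty unfolding Q_def by auto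
  have le_1: "integral\<^sup>L M (capped_sup u) \<le> 1" if "u \<in> Q" for u
  proof -
    have "integral\<^sup>L M (capped_sup u) \<le> integral\<^sup>L M (\<lambda>_. 1)"
      using that capped_sup_le_1 by (intro integral_mono integrable_capped_sup) (auto simp: Q_def)
    then show ?thesis by (simp add: prob_space)
  qed
  then have bdd: "bdd_above ((\<lambda>u. integral\<^sup>L M (capped_sup u)) ` Q)"
    by (intro bdd_aboveI[of _ 1]) auto
  have le_S: "integral\<^sup>L M (capped_sup u) \<le> S" if "u \<in> Q" for u
    unfolding S_def using that by (rule cSUP_upper[OF _ bdd])
  have "\<exists>u\<in>Q. S - 1 / real (Suc m) < integral\<^sup>L M (capped_sup u)" for m
    using less_cSUP_iff[OF Q_nonempty bdd, of "S - 1 / real (Suc m)"] unfolding S_def by simp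
  then obtain U where U: "\<And>m. U m \<in> Q" "\<And>m. S - 1 / real (Suc m) < integral\<^sup>L M (capped_sup (U m))"
    by metis
  define w where "w i = U (fst (prod_decode i)) (snd (prod_decode i))" for i
  have w: "w \<in> Q" using U(1) unfolding w_def Q_def by auto
  have "S \<le> integral\<^sup>L M (capped_sup w)"
  proof (rule field_le_epsilon)
    fix e :: real assume "e > 0"
    then obtain m :: nat where "1 / real (Suc m) < e"
      using nat_approx_posE by blast
    moreover have "capped_sup (U m) x \<le> capped_sup w x" for x
      by (rule capped_sup_mono, rule exI[of _ "prod_encode (m, _)"]) (simp add: w_def)
    then have "integral\<^sup>L M (capped_sup (U m)) \<le> integral\<^sup>L M (capped_sup w)"
      using U(1) w by (intro integral_mono integrable_capped_sup) (auto simp: Q_def)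
    ultimately show "S \<le> integral\<^sup>L M (capped_sup w) + e"
      using U(2)[of m] by linarith
  qed
  then show ?thesis
    using w le_S unfolding Q_def by (blast intro: order_trans)
qed

lemma ess_sup_exists:
  "\<exists>g. g \<in> borel_measurable M \<and> (\<forall>f\<in>F. AE x in M. f x \<le> g x)
     \<and> (\<forall>h\<in>borel_measurable M. (\<forall>f\<in>F. AE x in M. f x \<le> h x) \<longrightarrow> (AE x in M. g x \<le> h x))"
proof -
  obtain w where w: "\<And>i. w i \<in> F"
    and max: "\<And>u. (\<And>i. u i \<in> F) \<Longrightarrow> integral\<^sup>L M (capped_sup u) \<le> integral\<^sup>L M (capped_sup w)"
    using capped_sup_maximizer by blast
  have "AE x in M. f x \<le> capped_sup w x" if f: "f \<in> F" for f
  proof -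
    define w' where "w' i = (if i = 0 then f else w (i - 1))" for i
    have w': "w' i \<in> F" for i using f w unfolding w'_def by auto
    have below: "capped_sup w x \<le> capped_sup w' x" for x
      by (rule capped_sup_mono, rule exI[of _ "Suc _"]) (simp add: w'_def)
    have "integral\<^sup>L M (\<lambda>x. capped_sup w' x - capped_sup w x) \<le> 0"
      using max[OF w'] integrable_capped_sup[OF w'] integrable_capped_sup[OF w] by simp
    moreover have "integral\<^sup>L M (\<lambda>x. capped_sup w' x - capped_sup w x) \<ge> 0"
      using below by (intro integral_nonneg_AE) auto
    ultimately have "AE x in M. capped_sup w' x - capped_sup w x = 0"
      using integral_nonneg_eq_0_iff_AE[of M "\<lambda>x. capped_sup w' x - capped_sup w x"]
        integrable_capped_sup[OF w'] integrable_capped_sup[OF w] below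
      by simp
    moreover have "AE x in M. min 1 (f x) \<le> capped_sup w' x"
      using capped_sup_upper[of w' 0] unfolding w'_def by simp
    ultimately show ?thesis
      using F_le_1[OF f] by eventually_elim linarith
  qed
  moreover have "AE x in M. capped_sup w x \<le> h x"
    if "\<forall>f\<in>F. AE x in M. f x \<le> h x" for h
  proof -
    have "AE x in M. \<forall>i. w i x \<le> h x"
      using w that by (subst AE_all_countable) auto
    then show ?thesis
    proof eventually_elim
      case (elim x)
      then show ?case by (intro capped_sup_least) (meson min.coboundedI2)
    qed
  qed
  ultimately show ?thesis
    using capped_sup_measurable[OF w] by (intro exI[of _ "capped_sup w"]) simp
qed

lemma ess_sup_family:
  shows "ess_sup_family M F \<in> borel_measurable M"
    and "\<And>f. f \<in> F \<Longrightarrow> AE x in M. f x \<le> ess_sup_family M F x"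
    and "\<And>h. h \<in> borel_measurable M \<Longrightarrow> (\<forall>f\<in>F. AE x in M. f x \<le> h x)
           \<Longrightarrow> AE x in M. ess_sup_family M F x \<le> h x"
proof -
  note spec = someI_ex[OF ess_sup_exists, folded ess_sup_family_def]
  show "ess_sup_family M F \<in> borel_measurable M"
    using spec by (rule conjunct1)
  show "AE x in M. f x \<le> ess_sup_family M F x" if "f \<in> F" for f
    using spec that by simp
  show "AE x in M. ess_sup_family M F x \<le> h x"
    if "h \<in> borel_measurable M" "\<forall>f\<in>F. AE x in M. f x \<le> h x" for h
    using spec that by simp
qed

end

end

lemma space_gen_sigma: "space (gen_sigma M Y I) = space M"
  unfolding gen_sigma_def by (rule space_measure_of) auto

lemma sets_gen_sigma:
  "sets (gen_sigma M Y I) = sigma_sets (space M) {Y i -` B \<inter> space M | i B. i \<in> I \<and> B \<in> sets borel}"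
  unfolding gen_sigma_def by (rule sets_measure_of) auto

lemma subalgebra_gen_sigma:
  assumes "\<And>i. Y i \<in> borel_measurable M"
  shows "subalgebra M (gen_sigma M Y I)"
proof -
  have "{Y i -` B \<inter> space M | i B. i \<in> I \<and> B \<in> sets borel} \<subseteq> sets M"
    using assms by (auto simp: measurable_def)
  then show ?thesis
    unfolding subalgebra_def space_gen_sigma sets_gen_sigma by (simp add: sets.sigma_sets_subset)
qed

lemma measurable_gen_sigma:
  assumes "i \<in> I"
  shows "Y i \<in> borel_measurable (gen_sigma M Y I)"
proof (rule measurableI)
  fix B :: "real set" assume "B \<in> sets borel"
  then show "Y i -` B \<inter> space (gen_sigma M Y I) \<in> sets (gen_sigma M Y I)"
    unfolding space_gen_sigma sets_gen_sigma using assms by (intro sigma_sets.Basic) blast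
qed (simp add: space_gen_sigma)

lemma sum_indicator_le:
  fixes q K :: int
  assumes "-K \<le> q" "q \<le> K"
  shows "(\<Sum>j\<in>{-K+1..K}. if j \<le> q then 1 else 0 :: real) = real_of_int q + real_of_int K"
proof -
  have "{-K+1..K} \<inter> {j. j \<le> q} = {-K+1..q}" using assms by auto
  then show ?thesis using assms by (simp add: sum.If_cases)
qed

definition floor_grid :: "nat \<Rightarrow> real \<Rightarrow> real" where
  "floor_grid N y = \<lfloor>real N * y\<rfloor> / real N"

text \<open>A layer-cake representation: on \<open>[-F, F]\<close> the grid approximation is an affine
  combination of the indicators of \<open>j / N \<le> y\<close>, with \<open>2 \<lceil>N F\<rceil>\<close> terms of weight \<open>1 / N\<close>.\<close>

lemma floor_grid_eq_sum_indicator: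
  assumes y: "\<bar>y\<bar> \<le> F" and N: "N \<ge> 1"
  defines "K \<equiv> \<lceil>real N * F\<rceil>"
  shows "floor_grid N y = (- real_of_int K + (\<Sum>j\<in>{-K+1..K}. if real_of_int j / real N \<le> y then 1 else 0)) / real N"
proof -
  define q where "q = \<lfloor>real N * y\<rfloor>"
  have "- F \<le> y" "y \<le> F" using y by (auto simp: abs_le_iff)
  then have "- (real N * F) \<le> real N * y" "real N * y \<le> real N * F"
    using mult_left_mono[of "-F" y "real N"] mult_left_mono[of y F "real N"] by auto
  then have q: "-K \<le> q" "q \<le> K"
    unfolding q_def K_def by (linarith, meson floor_le_ceiling floor_mono order_trans)
  have "real_of_int j / real N \<le> y \<longleftrightarrow> j \<le> q" for j
    unfolding q_def using N by (simp add: le_floor_iff field_simps)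
  then show ?thesis
    using sum_indicator_le[OF q] unfolding floor_grid_def q_def by simp
qed

lemma abs_floor_grid_le:
  assumes "\<bar>y\<bar> \<le> F" "N \<ge> 1"
  shows "\<bar>floor_grid N y\<bar> \<le> F + 1"
proof -
  have "\<bar>real N * y\<bar> \<le> real N * F" using assms by (simp add: abs_mult mult_left_mono)
  then have "\<bar>real_of_int \<lfloor>real N * y\<rfloor>\<bar> \<le> real N * F + 1" by linarith
  also have "\<dots> \<le> real N * (F + 1)" using assms by (simp add: algebra_simps)
  finally show ?thesis
    unfolding floor_grid_def using assms(2) by (simp add: abs_div divide_le_eq mult.commute)
qed

lemma abs_floor_grid_diff_le:
  assumes "N \<ge> 1"
  shows "\<bar>y - floor_grid N y\<bar> \<le> 1 / real N"
proof -
  have "0 \<le> real N * y - \<lfloor>real N * y\<rfloor>" "real N * y - \<lfloor>real N * y\<rfloor> \<le> 1" by linarith+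
  moreover have "y - floor_grid N y = (real N * y - \<lfloor>real N * y\<rfloor>) / real N"
    unfolding floor_grid_def using assms by (simp add: field_simps)
  ultimately show ?thesis using assms by (simp add: divide_right_mono)
qed

lemma borel_measurable_floor_grid [measurable]: "floor_grid N \<in> borel_measurable borel"
  unfolding floor_grid_def by measurable

context prob_space
begin

context
  fixes MA MB :: "'a measure"
  assumes sub_A: "subalgebra M MA" and sub_B: "subalgebra M MB"
begin

interpretation B: sigma_finite_subalgebra M MB
  using sub_B finite_measure_axioms
  by (intro finite_measure_subalgebra_is_sigma_finite)
    (simp add: finite_measure_subalgebra_def finite_measure_subalgebra_axioms_def)

lemma cond_prob_deviation:
  assumes "A \<in> sets MA"
  defines "d \<equiv> \<lambda>x. \<bar>real_cond_exp M MB (indicator A) x - measure M A\<bar>"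
  shows "d \<in> borel_measurable M" "\<And>x. 0 \<le> d x" "AE x in M. d x \<le> 1" "integrable M d"
proof -
  have A: "A \<in> sets M" using assms sub_A unfolding subalgebra_def by auto
  show d_meas: "d \<in> borel_measurable M" unfolding d_def by measurable
  show "0 \<le> d x" for x unfolding d_def by simp
  have ind: "integrable M (indicator A :: 'a \<Rightarrow> real)" using A by (simp add: emeasure_eq_measure)
  have "AE x in M. 0 \<le> real_cond_exp M MB (indicator A) x"
    by (rule B.real_cond_exp_ge_c[OF ind]) auto
  moreover have "AE x in M. real_cond_exp M MB (indicator A) x \<le> 1"
    by (rule B.real_cond_exp_le_c[OF ind]) (auto split: split_indicator)
  ultimately show d_le: "AE x in M. d x \<le> 1"
    unfolding d_def
  proof eventually_elim
    case (elim x)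
    then show ?case using prob_le_1[of A] measure_nonneg[of M A] unfolding abs_le_iff by linarith
  qed
  show "integrable M d"
    using d_meas d_le by (intro integrable_const_bound[where B=1]) (auto simp: d_def)
qed

lemma
  shows beta_coef_le_1: "beta_coef M MA MB \<le> 1"
    and integral_cond_prob_deviation_le_beta_coef: "\<And>A. A \<in> sets MA \<Longrightarrow>
      integral\<^sup>L M (\<lambda>x. \<bar>real_cond_exp M MB (indicator A) x - measure M A\<bar>) \<le> beta_coef M MA MB"
proof -
  define F where "F = {(\<lambda>x. \<bar>real_cond_exp M MB (indicator A) x - measure M A\<bar>) | A. A \<in> sets MA}"
  define g where "g = ess_sup_family M F"
  have F: "F \<noteq> {}" "\<And>f. f \<in> F \<Longrightarrow> f \<in> borel_measurable M" "\<And>f x. f \<in> F \<Longrightarrow> 0 \<le> f x"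
    "\<And>f. f \<in> F \<Longrightarrow> AE x in M. f x \<le> 1"
    unfolding F_def using sets.empty_sets[of MA] cond_prob_deviation by blast+
  have g: "g \<in> borel_measurable M" "\<And>f. f \<in> F \<Longrightarrow> AE x in M. f x \<le> g x"
    "\<And>h. h \<in> borel_measurable M \<Longrightarrow> \<forall>f\<in>F. AE x in M. f x \<le> h x \<Longrightarrow> AE x in M. g x \<le> h x"
    unfolding g_def using ess_sup_family[where F=F] F by blast+
  have g_le_1: "AE x in M. g x \<le> 1"
    using g(3)[of "\<lambda>_. 1"] F(4) by simp
  obtain f0 where f0: "f0 \<in> F" using F(1) by blast
  from g(2)[OF f0] have "AE x in M. 0 \<le> g x"
  proof eventually_elim
    case (elim x)
    then show ?case using F(3)[OF f0, of x] by linarith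
  qed
  then have g_int: "integrable M g"
    using g(1) g_le_1 by (intro integrable_const_bound[where B=1]) auto
  have beta: "beta_coef M MA MB = integral\<^sup>L M g"
    unfolding beta_coef_def g_def F_def ..
  have "integral\<^sup>L M g \<le> integral\<^sup>L M (\<lambda>_. 1)"
    using g_int g_le_1 by (intro integral_mono_AE) auto
  then show "beta_coef M MA MB \<le> 1" using beta by (simp add: prob_space)
  fix A assume A: "A \<in> sets MA"
  then have "(\<lambda>x. \<bar>real_cond_exp M MB (indicator A) x - measure M A\<bar>) \<in> F"
    unfolding F_def by blast
  then have "integral\<^sup>L M (\<lambda>x. \<bar>real_cond_exp M MB (indicator A) x - measure M A\<bar>) \<le> integral\<^sup>L M g"
    using cond_prob_deviation(4)[OF A] g(2) g_int by (intro integral_mono_AE)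
  then show "integral\<^sup>L M (\<lambda>x. \<bar>real_cond_exp M MB (indicator A) x - measure M A\<bar>) \<le> beta_coef M MA MB"
    using beta by simp
qed

lemma beta_coef_nonneg: "0 \<le> beta_coef M MA MB"
proof -
  have "0 \<le> integral\<^sup>L M (\<lambda>x. \<bar>real_cond_exp M MB (indicator {}) x - measure M {}\<bar>)"
    by (rule Bochner_Integration.integral_nonneg) simp
  then show ?thesis
    using integral_cond_prob_deviation_le_beta_coef[OF sets.empty_sets] by linarith
qed

lemma abs_covar_indicator_le_beta_coef:
  assumes A: "A \<in> sets MA" and psi: "psi \<in> borel_measurable MB" "\<And>x. \<bar>psi x\<bar> \<le> C"
  shows "\<bar>covar M (indicator A) psi\<bar> \<le> C * beta_coef M MA MB"
proof -
  let ?r = "real_cond_exp M MB (indicator A)"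
  have A_M: "A \<in> sets M" using A sub_A unfolding subalgebra_def by auto
  have psi_M: "psi \<in> borel_measurable M" by (rule measurable_from_subalg[OF sub_B psi(1)])
  have C: "0 \<le> C" using psi(2)[of undefined] by linarith
  have int_psi: "integrable M psi" using psi_M psi(2) by (rule integrable_bounded)
  have int_ind_psi: "integrable M (\<lambda>x. psi x * indicator A x)"
    using psi_M A_M psi(2) C by (intro integrable_bounded[where B=C]) (auto split: split_indicator)
  note cond = B.real_cond_exp_intg[OF int_ind_psi psi(1)]
  have "covar M (indicator A) psi = integral\<^sup>L M (\<lambda>x. psi x * (?r x - measure M A))"
    using cond A_M int_psi unfolding covar_def by (simp add: right_diff_distrib mult.commute)
  also have "\<bar>\<dots>\<bar> \<le> integral\<^sup>L M (\<lambda>x. C * \<bar>?r x - measure M A\<bar>)"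
  proof (rule abs_integral_le_integral)
    show "integrable M (\<lambda>x. psi x * (?r x - measure M A))"
      using cond int_psi A_M by (simp add: right_diff_distrib)
    show "\<bar>psi x * (?r x - measure M A)\<bar> \<le> C * \<bar>?r x - measure M A\<bar>" for x
      unfolding abs_mult using psi(2) by (intro mult_right_mono) auto
  qed (use cond_prob_deviation(4)[OF A] in simp)
  also have "\<dots> \<le> C * beta_coef M MA MB"
    using integral_cond_prob_deviation_le_beta_coef[OF A] C by (simp add: mult_left_mono)
  finally show ?thesis .
qed

lemma abs_covar_floor_grid_le_beta_coef:
  fixes N :: nat
  assumes h: "h \<in> borel_measurable MA" "\<And>x. \<bar>h x\<bar> \<le> F"
    and psi: "psi \<in> borel_measurable MB" "\<And>x. \<bar>psi x\<bar> \<le> C" and N: "N \<ge> 1"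
  shows "\<bar>covar M (\<lambda>x. floor_grid N (h x)) psi\<bar>
    \<le> 2 * F * C * beta_coef M MA MB + 2 * C * beta_coef M MA MB / real N"
proof -
  define \<beta> where "\<beta> = beta_coef M MA MB"
  define K where "K = \<lceil>real N * F\<rceil>"
  define A where "A j = {x \<in> space M. real_of_int j / real N \<le> h x}" for j
  have N_pos: "real N > 0" using N by simp
  have F: "0 \<le> F" and C: "0 \<le> C" using h(2) psi(2) by (meson abs_ge_zero order_trans)+
  have psi_M: "psi \<in> borel_measurable M" by (rule measurable_from_subalg[OF sub_B psi(1)])
  have A_sets: "A j \<in> sets MA" for j
  proof -
    have "A j = {x \<in> space MA. real_of_int j / real N \<le> h x}"
      using sub_A unfolding A_def subalgebra_def by simp
    also have "\<dots> \<in> sets MA" using h(1) by measurable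
    finally show ?thesis .
  qed
  have A_M: "A j \<in> sets M" for j using A_sets sub_A unfolding subalgebra_def by auto
  have "covar M (\<lambda>x. floor_grid N (h x)) psi
      = covar M (\<lambda>x. (- real_of_int K + (\<Sum>j\<in>{-K+1..K}. indicator (A j) x)) / real N) psi"
    using floor_grid_eq_sum_indicator[OF h(2) N] unfolding K_def A_def
    by (intro covar_cong) (simp add: indicator_def of_bool_def)
  also have "\<dots> = (\<Sum>j\<in>{-K+1..K}. covar M (indicator (A j)) psi) / real N"
    using A_M psi_M psi(2) C
    by (intro covar_affine_sum_left integrable_bounded integrable_mult_bounded[where a=1 and b=C])
      (auto simp: emeasure_eq_measure split: split_indicator)
  finally have "\<bar>covar M (\<lambda>x. floor_grid N (h x)) psi\<bar>
      \<le> (\<Sum>j\<in>{-K+1..K}. \<bar>covar M (indicator (A j)) psi\<bar>) / real N"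
    using N_pos by (simp add: divide_right_mono sum_abs)
  also have "\<dots> \<le> (\<Sum>j\<in>{-K+1..K}. C * \<beta>) / real N"
    using N_pos abs_covar_indicator_le_beta_coef[OF A_sets psi]
    unfolding \<beta>_def by (intro divide_right_mono sum_mono) auto
  also have "\<dots> \<le> (2 * real N * F + 2) * (C * \<beta>) / real N"
  proof -
    have "0 \<le> real N * F" using F by simp
    then have "real (nat (2 * K)) \<le> 2 * real N * F + 2" unfolding K_def by linarith
    then have "real (nat (2 * K)) * (C * \<beta>) \<le> (2 * real N * F + 2) * (C * \<beta>)"
      using C beta_coef_nonneg unfolding \<beta>_def by (intro mult_right_mono) auto
    then show ?thesis using N_pos by (simp add: divide_right_mono)
  qed
  also have "\<dots> = 2 * F * C * \<beta> + 2 * C * \<beta> / real N"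
    using N_pos by (simp add: field_simps)
  finally show ?thesis unfolding \<beta>_def .
qed

text \<open>The grid approximation of \<open>h\<close> has error at most \<open>1 / N\<close>, with \<open>N\<close> arbitrary.\<close>

lemma abs_covar_le_beta_coef:
  assumes h: "h \<in> borel_measurable MA" "\<And>x. \<bar>h x\<bar> \<le> F"
    and psi: "psi \<in> borel_measurable MB" "\<And>x. \<bar>psi x\<bar> \<le> C"
  shows "\<bar>covar M h psi\<bar> \<le> 2 * F * C * beta_coef M MA MB"
proof (rule field_le_epsilon)
  fix e :: real assume e: "e > 0"
  define \<beta> where "\<beta> = beta_coef M MA MB"
  have C: "0 \<le> C" using psi(2) by (meson abs_ge_zero order_trans)
  obtain N :: nat where N: "2 * C * (\<beta> + 1) / e < real N"
    using reals_Archimedean2 by blast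
  moreover have "0 \<le> 2 * C * (\<beta> + 1) / e"
    using C beta_coef_nonneg e unfolding \<beta>_def by simp
  ultimately have N1: "N \<ge> 1" by linarith
  have h_M: "h \<in> borel_measurable M" by (rule measurable_from_subalg[OF sub_A h(1)])
  have psi_M: "psi \<in> borel_measurable M" by (rule measurable_from_subalg[OF sub_B psi(1)])
  let ?hN = "\<lambda>x. floor_grid N (h x)"
  have "covar M (\<lambda>x. h x - ?hN x) psi = covar M h psi - covar M ?hN psi"
    using h_M psi_M h(2) abs_floor_grid_le[OF h(2) N1] psi(2)
    by (intro covar_diff_left integrable_mult_bounded integrable_bounded) auto
  moreover have "\<bar>covar M (\<lambda>x. h x - ?hN x) psi\<bar> \<le> 2 * (1 / real N) * C"
    using h_M psi_M abs_floor_grid_diff_le[OF N1] psi(2) by (intro abs_covar_le_bounded) auto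
  ultimately have "\<bar>covar M h psi\<bar> \<le> 2 * F * C * \<beta> + 2 * C * \<beta> / real N + 2 * (1 / real N) * C"
    using abs_covar_floor_grid_le_beta_coef[OF h psi N1] abs_triangle_ineq[of "covar M ?hN psi"]
    unfolding \<beta>_def by simp
  also have "\<dots> = 2 * F * C * \<beta> + 2 * C * (\<beta> + 1) / real N"
    by (simp add: field_simps add_divide_distrib)
  also have "\<dots> \<le> 2 * F * C * \<beta> + e"
    using N N1 e by (simp add: field_simps)
  finally show "\<bar>covar M h psi\<bar> \<le> 2 * F * C * beta_coef M MA MB + e"
    unfolding \<beta>_def .
qed
end

end

section \<open>Stationarity and decay of covariances\<close>

lemma stationary_integral_shift:
  fixes Y :: "nat \<Rightarrow> 'a \<Rightarrow> real" and G :: "(nat \<Rightarrow> real) \<Rightarrow> real"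
  assumes stat: "strictly_stationary M Y" and Y: "\<And>i. Y i \<in> borel_measurable M"
    and G: "G \<in> borel_measurable (PiM {1..m} (\<lambda>_. borel))"
  shows "integral\<^sup>L M (\<lambda>\<omega>. G (\<lambda>i\<in>{1..m}. Y (i + k) \<omega>)) = integral\<^sup>L M (\<lambda>\<omega>. G (\<lambda>i\<in>{1..m}. Y i \<omega>))"
    and "integrable M (\<lambda>\<omega>. G (\<lambda>i\<in>{1..m}. Y (i + k) \<omega>)) \<longleftrightarrow> integrable M (\<lambda>\<omega>. G (\<lambda>i\<in>{1..m}. Y i \<omega>))"
proof -
  have shifted: "(\<lambda>\<omega>. \<lambda>i\<in>{1..m}. Y (i + k) \<omega>) \<in> measurable M (PiM {1..m} (\<lambda>_. borel))"
    and unshifted: "(\<lambda>\<omega>. \<lambda>i\<in>{1..m}. Y i \<omega>) \<in> measurable M (PiM {1..m} (\<lambda>_. borel))"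
    using Y by (auto intro!: measurable_restrict)
  have "distr M (PiM {1..m} (\<lambda>_. borel)) (\<lambda>\<omega>. \<lambda>i\<in>{1..m}. Y (i + k) \<omega>)
      = distr M (PiM {1..m} (\<lambda>_. borel)) (\<lambda>\<omega>. \<lambda>i\<in>{1..m}. Y i \<omega>)"
    using stat unfolding strictly_stationary_def by blast
  then show "integral\<^sup>L M (\<lambda>\<omega>. G (\<lambda>i\<in>{1..m}. Y (i + k) \<omega>)) = integral\<^sup>L M (\<lambda>\<omega>. G (\<lambda>i\<in>{1..m}. Y i \<omega>))"
    and "integrable M (\<lambda>\<omega>. G (\<lambda>i\<in>{1..m}. Y (i + k) \<omega>)) \<longleftrightarrow> integrable M (\<lambda>\<omega>. G (\<lambda>i\<in>{1..m}. Y i \<omega>))"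
    using integral_distr[OF shifted G] integral_distr[OF unshifted G]
      integrable_distr_eq[OF shifted G] integrable_distr_eq[OF unshifted G] by simp_all
qed

lemma stationary_integral_pair:
  fixes Y :: "nat \<Rightarrow> 'a \<Rightarrow> real" and phi psi :: "real \<Rightarrow> real"
  assumes stat: "strictly_stationary M Y" and Y: "\<And>i. Y i \<in> borel_measurable M"
    and phi: "phi \<in> borel_measurable borel" and psi: "psi \<in> borel_measurable borel"
    and ij: "1 \<le> i" "i \<le> j"
  shows "integral\<^sup>L M (\<lambda>\<omega>. phi (Y i \<omega>) * psi (Y j \<omega>))
      = integral\<^sup>L M (\<lambda>\<omega>. phi (Y 1 \<omega>) * psi (Y (Suc (j - i)) \<omega>))"
    and "integrable M (\<lambda>\<omega>. phi (Y i \<omega>) * psi (Y j \<omega>))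
      \<longleftrightarrow> integrable M (\<lambda>\<omega>. phi (Y 1 \<omega>) * psi (Y (Suc (j - i)) \<omega>))"
proof -
  define m where "m = Suc (j - i)"
  define G where "G w = phi (w 1) * psi (w m)" for w :: "nat \<Rightarrow> real"
  have m: "1 \<in> {1..m}" "m \<in> {1..m}" unfolding m_def by auto
  have "G \<in> borel_measurable (PiM {1..m} (\<lambda>_. borel))"
    unfolding G_def using m phi psi by measurable
  moreover have "G (\<lambda>l\<in>{1..m}. Y (l + (i - 1)) \<omega>) = phi (Y i \<omega>) * psi (Y j \<omega>)"
    and "G (\<lambda>l\<in>{1..m}. Y l \<omega>) = phi (Y 1 \<omega>) * psi (Y (Suc (j - i)) \<omega>)" for \<omega>
    unfolding G_def using m ij by (simp_all add: m_def)
  ultimately show "integral\<^sup>L M (\<lambda>\<omega>. phi (Y i \<omega>) * psi (Y j \<omega>))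
      = integral\<^sup>L M (\<lambda>\<omega>. phi (Y 1 \<omega>) * psi (Y (Suc (j - i)) \<omega>))"
    and "integrable M (\<lambda>\<omega>. phi (Y i \<omega>) * psi (Y j \<omega>))
      \<longleftrightarrow> integrable M (\<lambda>\<omega>. phi (Y 1 \<omega>) * psi (Y (Suc (j - i)) \<omega>))"
    using stationary_integral_shift[OF stat Y, of G m "i - 1"] by simp_all
qed

lemma stationary_integral_single:
  fixes Y :: "nat \<Rightarrow> 'a \<Rightarrow> real" and phi :: "real \<Rightarrow> real"
  assumes "strictly_stationary M Y" "\<And>i. Y i \<in> borel_measurable M"
    and "phi \<in> borel_measurable borel" and "1 \<le> i"
  shows "integral\<^sup>L M (\<lambda>\<omega>. phi (Y i \<omega>)) = integral\<^sup>L M (\<lambda>\<omega>. phi (Y 1 \<omega>))"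
    and "integrable M (\<lambda>\<omega>. phi (Y i \<omega>)) \<longleftrightarrow> integrable M (\<lambda>\<omega>. phi (Y 1 \<omega>))"
  using stationary_integral_pair[OF assms(1,2,3), of "\<lambda>_. 1" i i] assms(4) by simp_all

lemma beta_coef_le_beta_Y:
  assumes "prob_space M" "\<And>i. Y i \<in> borel_measurable M"
  shows "beta_coef M (gen_sigma M Y {1..1}) (gen_sigma M Y {k+1..}) \<le> beta_Y M Y k"
proof -
  have "bdd_above ((\<lambda>m. beta_coef M (gen_sigma M Y {1..m}) (gen_sigma M Y {k+m..})) ` {1..})"
    using prob_space.beta_coef_le_1[OF assms(1) subalgebra_gen_sigma subalgebra_gen_sigma] assms(2)
    by (intro bdd_aboveI[of _ 1]) auto
  from cSUP_upper[OF _ this, of 1] show ?thesis unfolding beta_Y_def by simp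
qed

lemma abs_covar_le_beta_Y:
  fixes Y :: "nat \<Rightarrow> 'a \<Rightarrow> real" and phi psi :: "real \<Rightarrow> real"
  assumes M: "prob_space M" and Y: "\<And>i. Y i \<in> borel_measurable M"
    and phi: "phi \<in> borel_measurable borel" "\<And>x. \<bar>phi x\<bar> \<le> F"
    and psi: "psi \<in> borel_measurable borel" "\<And>x. \<bar>psi x\<bar> \<le> C"
  shows "\<bar>covar M (\<lambda>\<omega>. phi (Y 1 \<omega>)) (\<lambda>\<omega>. psi (Y (Suc k) \<omega>))\<bar> \<le> 2 * F * C * beta_Y M Y k"
proof -
  have "(\<lambda>\<omega>. phi (Y 1 \<omega>)) \<in> borel_measurable (gen_sigma M Y {1..1})"
    by (rule measurable_compose[OF measurable_gen_sigma phi(1)]) simp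
  moreover have "(\<lambda>\<omega>. psi (Y (Suc k) \<omega>)) \<in> borel_measurable (gen_sigma M Y {k+1..})"
    by (rule measurable_compose[OF measurable_gen_sigma psi(1)]) simp
  ultimately have "\<bar>covar M (\<lambda>\<omega>. phi (Y 1 \<omega>)) (\<lambda>\<omega>. psi (Y (Suc k) \<omega>))\<bar>
      \<le> 2 * F * C * beta_coef M (gen_sigma M Y {1..1}) (gen_sigma M Y {k+1..})"
    using phi(2) psi(2)
    by (intro prob_space.abs_covar_le_beta_coef[OF M subalgebra_gen_sigma[OF Y] subalgebra_gen_sigma[OF Y]])
  also have "\<dots> \<le> 2 * F * C * beta_Y M Y k"
    using beta_coef_le_beta_Y[OF M Y] phi(2)[of 0] psi(2)[of 0]
    by (intro mult_left_mono) auto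
  finally show ?thesis .
qed

definition truncate :: "real \<Rightarrow> real \<Rightarrow> real" where
  "truncate c x = max (- c) (min c x)"

lemma abs_truncate_le: "0 \<le> c \<Longrightarrow> \<bar>truncate c x\<bar> \<le> c" "0 \<le> c \<Longrightarrow> \<bar>truncate c x\<bar> \<le> \<bar>x\<bar>"
  and abs_truncate_diff_le: "0 \<le> c \<Longrightarrow> \<bar>x - truncate c x\<bar> \<le> \<bar>x\<bar>"
  and truncate_eq: "\<bar>x\<bar> \<le> c \<Longrightarrow> truncate c x = x"
  unfolding truncate_def by auto

lemma borel_measurable_truncate [measurable]: "truncate c \<in> borel_measurable borel"
  unfolding truncate_def by measurable

context
  fixes M :: "'a measure" and Y :: "nat \<Rightarrow> 'a \<Rightarrow> real" and phi :: "real \<Rightarrow> real"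
  assumes M: "prob_space M" and Y: "\<And>i. Y i \<in> borel_measurable M"
    and stat: "strictly_stationary M Y"
    and phi: "phi \<in> borel_measurable borel"
    and phi_square_integrable: "integrable M (\<lambda>\<omega>. (phi (Y 1 \<omega>))\<^sup>2)"
begin

interpretation prob_space M by (rule M)

lemma square_integrable_stationary:
  assumes g: "g \<in> borel_measurable borel" and dom: "\<And>x. \<bar>g x\<bar> \<le> \<bar>phi x\<bar>" and i: "1 \<le> i"
  shows "integrable M (\<lambda>\<omega>. (g (Y i \<omega>))\<^sup>2)"
    and "integral\<^sup>L M (\<lambda>\<omega>. (g (Y i \<omega>))\<^sup>2) = integral\<^sup>L M (\<lambda>\<omega>. (g (Y 1 \<omega>))\<^sup>2)"
    and "integral\<^sup>L M (\<lambda>\<omega>. (g (Y i \<omega>))\<^sup>2) \<le> integral\<^sup>L M (\<lambda>\<omega>. (phi (Y 1 \<omega>))\<^sup>2)"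
proof -
  have g2: "(\<lambda>x. (g x)\<^sup>2) \<in> borel_measurable borel" using g by measurable
  have le: "(g x)\<^sup>2 \<le> (phi x)\<^sup>2" for x using dom[of x] by (simp add: abs_le_square_iff)
  have int1: "integrable M (\<lambda>\<omega>. (g (Y 1 \<omega>))\<^sup>2)"
    using Y g le by (intro Bochner_Integration.integrable_bound[OF phi_square_integrable]) auto
  show "integrable M (\<lambda>\<omega>. (g (Y i \<omega>))\<^sup>2)"
    using stationary_integral_single(2)[OF stat Y g2 i] int1 by simp
  show eq: "integral\<^sup>L M (\<lambda>\<omega>. (g (Y i \<omega>))\<^sup>2) = integral\<^sup>L M (\<lambda>\<omega>. (g (Y 1 \<omega>))\<^sup>2)"
    using stationary_integral_single(1)[OF stat Y g2 i] .
  show "integral\<^sup>L M (\<lambda>\<omega>. (g (Y i \<omega>))\<^sup>2) \<le> integral\<^sup>L M (\<lambda>\<omega>. (phi (Y 1 \<omega>))\<^sup>2)"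
    unfolding eq using int1 phi_square_integrable le by (intro integral_mono) auto
qed

text \<open>Split \<open>phi\<close> into its truncation at level \<open>c\<close>, whose covariances are controlled by the
  mixing coefficients, and a remainder that is small in \<open>L\<^sup>2\<close>.\<close>

lemma abs_covar_stationary_le:
  assumes c: "0 \<le> c" and t: "0 < t"
  shows "\<bar>covar M (\<lambda>\<omega>. phi (Y 1 \<omega>)) (\<lambda>\<omega>. phi (Y (Suc k) \<omega>))\<bar>
    \<le> 2 * c\<^sup>2 * beta_Y M Y k + 2 * t * integral\<^sup>L M (\<lambda>\<omega>. (phi (Y 1 \<omega>) - truncate c (phi (Y 1 \<omega>)))\<^sup>2)
       + 2 * integral\<^sup>L M (\<lambda>\<omega>. (phi (Y 1 \<omega>))\<^sup>2) / t"
proof -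
  define S where "S = integral\<^sup>L M (\<lambda>\<omega>. (phi (Y 1 \<omega>))\<^sup>2)"
  define r where "r x = phi x - truncate c (phi x)" for x
  define \<delta> where "\<delta> = integral\<^sup>L M (\<lambda>\<omega>. (r (Y 1 \<omega>))\<^sup>2)"
  let ?U = "\<lambda>\<omega>. phi (Y 1 \<omega>)" and ?V = "\<lambda>\<omega>. phi (Y (Suc k) \<omega>)"
  let ?Uc = "\<lambda>\<omega>. truncate c (phi (Y 1 \<omega>))" and ?Vc = "\<lambda>\<omega>. truncate c (phi (Y (Suc k) \<omega>))"
  let ?RU = "\<lambda>\<omega>. r (Y 1 \<omega>)" and ?RV = "\<lambda>\<omega>. r (Y (Suc k) \<omega>)"
  have r_meas: "r \<in> borel_measurable borel" unfolding r_def using phi by measurable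
  have trunc_meas: "(\<lambda>x. truncate c (phi x)) \<in> borel_measurable borel" using phi by measurable
  have meas: "?U \<in> borel_measurable M" "?V \<in> borel_measurable M" "?Uc \<in> borel_measurable M"
    "?Vc \<in> borel_measurable M" "?RU \<in> borel_measurable M" "?RV \<in> borel_measurable M"
    using Y phi r_meas by measurable
  have trunc_le: "\<bar>truncate c (phi x)\<bar> \<le> \<bar>phi x\<bar>" and r_le: "\<bar>r x\<bar> \<le> \<bar>phi x\<bar>" for x
    unfolding r_def using abs_truncate_le(2) abs_truncate_diff_le c by auto
  note sq_phi = square_integrable_stationary[OF phi order.refl]
  note sq_trunc = square_integrable_stationary[OF trunc_meas trunc_le]
  note sq_r = square_integrable_stationary[OF r_meas r_le]
  have sq: "integrable M (\<lambda>\<omega>. (?U \<omega>)\<^sup>2)" "integrable M (\<lambda>\<omega>. (?V \<omega>)\<^sup>2)" "integrable M (\<lambda>\<omega>. (?Uc \<omega>)\<^sup>2)"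
    "integrable M (\<lambda>\<omega>. (?Vc \<omega>)\<^sup>2)" "integrable M (\<lambda>\<omega>. (?RU \<omega>)\<^sup>2)" "integrable M (\<lambda>\<omega>. (?RV \<omega>)\<^sup>2)"
    using sq_phi(1) sq_trunc(1) sq_r(1) by auto
  have int: "integrable M f" if "f \<in> borel_measurable M" "integrable M (\<lambda>\<omega>. (f \<omega>)\<^sup>2)" for f :: "'a \<Rightarrow> real"
    using square_integrable_imp_integrable[OF that] .
  have int_mult: "integrable M (\<lambda>\<omega>. f \<omega> * g \<omega>)"
    if "f \<in> borel_measurable M" "integrable M (\<lambda>\<omega>. (f \<omega>)\<^sup>2)"
      "g \<in> borel_measurable M" "integrable M (\<lambda>\<omega>. (g \<omega>)\<^sup>2)" for f g :: "'a \<Rightarrow> real"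
    using integrable_mult_square_integrable that by blast
  have split_U: "?U = (\<lambda>\<omega>. ?Uc \<omega> + ?RU \<omega>)" and split_V: "?V = (\<lambda>\<omega>. ?Vc \<omega> + ?RV \<omega>)"
    by (simp_all add: r_def)
  have "covar M ?U ?V = covar M ?Uc ?V + covar M ?RU ?V"
    unfolding split_U[THEN arg_cong[where f="\<lambda>U. covar M U ?V"]]
    using meas sq by (intro covar_add_left int[of ?Uc] int[of ?RU] int_mult[of _ ?V]) simp_all
  moreover have "covar M ?Uc ?V = covar M ?Uc ?Vc + covar M ?RV ?Uc"
    unfolding covar_commute[of ?Uc] split_V
    using meas sq by (intro covar_add_left int[of ?Vc] int[of ?RV] int_mult[of _ ?Uc]) simp_all
  moreover have "\<bar>covar M ?Uc ?Vc\<bar> \<le> 2 * c * c * beta_Y M Y k"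
    using abs_truncate_le(1)[OF c] by (intro abs_covar_le_beta_Y[OF M Y trunc_meas _ trunc_meas]) auto
  moreover have "\<bar>covar M ?RU ?V\<bar> \<le> t * \<delta> + S / t"
    using abs_covar_le[OF meas(5,2) sq(5,2) t] sq_phi(2)[of "Suc k"] unfolding \<delta>_def S_def by simp
  moreover have "\<bar>covar M ?RV ?Uc\<bar> \<le> t * \<delta> + S / t"
  proof -
    have "\<bar>covar M ?RV ?Uc\<bar> \<le> t * \<delta> + integral\<^sup>L M (\<lambda>\<omega>. (?Uc \<omega>)\<^sup>2) / t"
      using abs_covar_le[OF meas(6,3) sq(6,3) t] sq_r(2)[of "Suc k"] unfolding \<delta>_def by simp
    also have "\<dots> \<le> t * \<delta> + S / t"
      using sq_trunc(3)[of 1] t unfolding S_def by (simp add: divide_right_mono)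
    finally show ?thesis .
  qed
  ultimately have "\<bar>covar M ?U ?V\<bar> \<le> 2 * c * c * beta_Y M Y k + 2 * t * \<delta> + 2 * S / t"
    by linarith
  then show ?thesis
    unfolding S_def \<delta>_def r_def by (simp add: power2_eq_square)
qed

lemma covar_tendsto_0:
  assumes beta: "beta_Y M Y \<longlonglongrightarrow> 0"
  shows "(\<lambda>k. covar M (\<lambda>\<omega>. phi (Y 1 \<omega>)) (\<lambda>\<omega>. phi (Y (Suc k) \<omega>))) \<longlonglongrightarrow> 0"
proof (rule LIMSEQ_I)
  fix \<epsilon> :: real assume \<epsilon>: "\<epsilon> > 0"
  note [measurable] = Y phi
  define S where "S = integral\<^sup>L M (\<lambda>\<omega>. (phi (Y 1 \<omega>))\<^sup>2)"
  define \<delta> where "\<delta> c = integral\<^sup>L M (\<lambda>\<omega>. (phi (Y 1 \<omega>) - truncate c (phi (Y 1 \<omega>)))\<^sup>2)" for c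
  define t where "t = 6 * S / \<epsilon> + 1"
  have "0 \<le> S" unfolding S_def by simp
  then have t: "0 < t" "2 * S / t < \<epsilon> / 3"
    unfolding t_def using \<epsilon> by (auto simp: field_simps)
  have "(\<lambda>n. \<delta> (real n)) \<longlonglongrightarrow> integral\<^sup>L M (\<lambda>_. 0)"
    unfolding \<delta>_def
  proof (rule integral_dominated_convergence[OF _ _ phi_square_integrable])
    show "AE \<omega> in M. (\<lambda>n. (phi (Y 1 \<omega>) - truncate (real n) (phi (Y 1 \<omega>)))\<^sup>2) \<longlonglongrightarrow> 0"
    proof (rule AE_I2)
      fix \<omega>
      obtain N :: nat where "\<bar>phi (Y 1 \<omega>)\<bar> \<le> real N" using real_arch_simple by blast
      then have "\<forall>n\<ge>N. (phi (Y 1 \<omega>) - truncate (real n) (phi (Y 1 \<omega>)))\<^sup>2 = 0"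
        by (auto simp: truncate_eq)
      then show "(\<lambda>n. (phi (Y 1 \<omega>) - truncate (real n) (phi (Y 1 \<omega>)))\<^sup>2) \<longlonglongrightarrow> 0"
        by (intro tendsto_eventually) (auto simp: eventually_sequentially)
    qed
    show "AE \<omega> in M. norm ((phi (Y 1 \<omega>) - truncate (real n) (phi (Y 1 \<omega>)))\<^sup>2) \<le> (phi (Y 1 \<omega>))\<^sup>2" for n
      using abs_truncate_diff_le[of "real n"] by (simp add: abs_le_square_iff)
  qed measurable
  then have "eventually (\<lambda>n. \<delta> (real n) < \<epsilon> / (6 * t)) sequentially"
    using \<epsilon> t(1) by (intro order_tendstoD(2)) auto
  then obtain n :: nat where "\<delta> (real n) < \<epsilon> / (6 * t)"
    by (auto simp: eventually_sequentially)
  then have n: "2 * t * \<delta> (real n) < \<epsilon> / 3"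
    using t(1) by (simp add: pos_less_divide_eq mult.commute mult.left_commute)
  have "(\<lambda>k. 2 * (real n)\<^sup>2 * beta_Y M Y k) \<longlonglongrightarrow> 2 * (real n)\<^sup>2 * 0"
    by (intro tendsto_mult tendsto_const beta)
  then have "eventually (\<lambda>k. 2 * (real n)\<^sup>2 * beta_Y M Y k < \<epsilon> / 3) sequentially"
    using \<epsilon> by (intro order_tendstoD(2)) auto
  then obtain K where K: "\<And>k. k \<ge> K \<Longrightarrow> 2 * (real n)\<^sup>2 * beta_Y M Y k < \<epsilon> / 3"
    by (auto simp: eventually_sequentially)
  show "\<exists>K. \<forall>k\<ge>K. norm (covar M (\<lambda>\<omega>. phi (Y 1 \<omega>)) (\<lambda>\<omega>. phi (Y (Suc k) \<omega>)) - 0) < \<epsilon>"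
  proof (intro exI allI impI)
    fix k assume "k \<ge> K"
    have "\<bar>covar M (\<lambda>\<omega>. phi (Y 1 \<omega>)) (\<lambda>\<omega>. phi (Y (Suc k) \<omega>))\<bar>
        \<le> 2 * (real n)\<^sup>2 * beta_Y M Y k + 2 * t * \<delta> (real n) + 2 * S / t"
      using abs_covar_stationary_le[of "real n" t k] t(1) unfolding \<delta>_def S_def by simp
    then show "norm (covar M (\<lambda>\<omega>. phi (Y 1 \<omega>)) (\<lambda>\<omega>. phi (Y (Suc k) \<omega>)) - 0) < \<epsilon>"
      using K[OF \<open>k \<ge> K\<close>] n t(2) by simp
  qed
qed

end

section \<open>Second moments of weighted sums\<close>

definition nat_dist :: "nat \<Rightarrow> nat \<Rightarrow> nat" where
  "nat_dist i j = (if i \<le> j then j - i else i - j)"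

lemma sum_nat_dist_row_le:
  fixes H :: "nat \<Rightarrow> real"
  assumes H: "\<And>d. 0 \<le> H d" and i: "i \<in> {p+1..p+L}"
  shows "(\<Sum>j\<in>{p+1..p+L}. H (nat_dist i j)) \<le> 2 * (\<Sum>d<L. H d)"
proof -
  let ?S = "{p+1..p+L}"
  have "(\<Sum>j\<in>?S. H (nat_dist i j))
      \<le> (\<Sum>j\<in>?S. (if j \<le> i then H (i - j) else 0) + (if i \<le> j then H (j - i) else 0))"
    by (rule sum_mono) (use H in \<open>auto simp: nat_dist_def\<close>)
  also have "\<dots> = (\<Sum>j\<in>{j\<in>?S. j \<le> i}. H (i - j)) + (\<Sum>j\<in>{j\<in>?S. i \<le> j}. H (j - i))"
    by (simp add: sum.distrib sum.If_cases Int_def conj_commute)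
  also have "(\<Sum>j\<in>{j\<in>?S. j \<le> i}. H (i - j)) = (\<Sum>d\<in>(\<lambda>j. i - j) ` {j\<in>?S. j \<le> i}. H d)"
    by (rule sum.reindex_cong[symmetric]) (auto simp: inj_on_def)
  also have "\<dots> \<le> (\<Sum>d<L. H d)"
    using i H by (intro sum_mono2) auto
  also have "(\<Sum>j\<in>{j\<in>?S. i \<le> j}. H (j - i)) = (\<Sum>d\<in>(\<lambda>j. j - i) ` {j\<in>?S. i \<le> j}. H d)"
    by (rule sum.reindex_cong[symmetric]) (auto simp: inj_on_def)
  also have "\<dots> \<le> (\<Sum>d<L. H d)"
    using i H by (intro sum_mono2) auto
  finally show ?thesis by simp
qed

lemma sum_nat_dist_le:
  fixes H :: "nat \<Rightarrow> real"
  assumes "\<And>d. 0 \<le> H d"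
  shows "(\<Sum>i\<in>{p+1..p+L}. \<Sum>j\<in>{p+1..p+L}. H (nat_dist i j)) \<le> 2 * real L * (\<Sum>d<L. H d)"
proof -
  have "(\<Sum>i\<in>{p+1..p+L}. \<Sum>j\<in>{p+1..p+L}. H (nat_dist i j)) \<le> (\<Sum>i\<in>{p+1..p+L}. 2 * (\<Sum>d<L. H d))"
    by (intro sum_mono sum_nat_dist_row_le assms)
  then show ?thesis by simp
qed

lemma cesaro_abs_tendsto_0:
  fixes g :: "nat \<Rightarrow> real"
  assumes "g \<longlonglongrightarrow> 0"
  shows "(\<lambda>L. (\<Sum>d<L. \<bar>g d\<bar>) / real L) \<longlonglongrightarrow> 0"
proof (rule LIMSEQ_I)
  fix e :: real assume e: "e > 0"
  obtain D where D: "\<And>d. d \<ge> D \<Longrightarrow> \<bar>g d\<bar> < e / 2"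
    using LIMSEQ_D[OF assms, of "e / 2"] e by auto
  define A where "A = (\<Sum>d<D. \<bar>g d\<bar>)"
  obtain N :: nat where N: "2 * A / e < real N" using reals_Archimedean2 by blast
  show "\<exists>N. \<forall>L\<ge>N. norm ((\<Sum>d<L. \<bar>g d\<bar>) / real L - 0) < e"
  proof (intro exI[of _ "Suc N"] allI impI)
    fix L assume L: "L \<ge> Suc N"
    have "2 * A / e < real L" using N L by linarith
    then have A_small: "A < real L * (e / 2)" using e by (simp add: field_simps)
    have "(\<Sum>d<L. \<bar>g d\<bar>) \<le> (\<Sum>d<L. (if d < D then \<bar>g d\<bar> else 0) + e / 2)"
      using D e by (intro sum_mono) (auto simp: not_less less_imp_le)
    also have "\<dots> = (\<Sum>d\<in>{..<L} \<inter> {..<D}. \<bar>g d\<bar>) + real L * (e / 2)"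
      by (simp add: sum.distrib sum.If_cases Int_def)
    also have "\<dots> \<le> A + real L * (e / 2)"
      unfolding A_def by (simp add: sum_mono2)
    also have "\<dots> < real L * e"
      using A_small by simp
    finally have "(\<Sum>d<L. \<bar>g d\<bar>) / real L < e"
      using L by (simp add: divide_less_eq mult.commute)
    then show "norm ((\<Sum>d<L. \<bar>g d\<bar>) / real L - 0) < e"
      by (simp add: sum_nonneg)
  qed
qed

lemma integral_square_weighted_sum_le:
  fixes Z :: "nat \<Rightarrow> 'a \<Rightarrow> real" and w \<gamma> :: "nat \<Rightarrow> real" and p L :: nat
  defines "S \<equiv> {p+1..p+L}"
  assumes int: "\<And>i j. i \<in> S \<Longrightarrow> j \<in> S \<Longrightarrow> integrable M (\<lambda>x. Z i x * Z j x)"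
    and moment: "\<And>i j. i \<in> S \<Longrightarrow> j \<in> S \<Longrightarrow> integral\<^sup>L M (\<lambda>x. Z i x * Z j x) = \<gamma> (nat_dist i j)"
    and weight: "\<And>i. i \<in> S \<Longrightarrow> \<bar>w i\<bar> \<le> W"
  shows "integrable M (\<lambda>x. (\<Sum>i\<in>S. w i * Z i x)\<^sup>2)"
    and "integral\<^sup>L M (\<lambda>x. (\<Sum>i\<in>S. w i * Z i x)\<^sup>2) \<le> 2 * W\<^sup>2 * real L * (\<Sum>d<L. \<bar>\<gamma> d\<bar>)"
proof -
  have square: "(\<Sum>i\<in>S. w i * Z i x)\<^sup>2 = (\<Sum>i\<in>S. \<Sum>j\<in>S. (w i * w j) * (Z i x * Z j x))" for x
    unfolding power2_eq_square sum_product by (simp add: algebra_simps)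
  show "integrable M (\<lambda>x. (\<Sum>i\<in>S. w i * Z i x)\<^sup>2)"
    unfolding square using int by simp
  have "integral\<^sup>L M (\<lambda>x. (\<Sum>i\<in>S. w i * Z i x)\<^sup>2) = (\<Sum>i\<in>S. \<Sum>j\<in>S. (w i * w j) * \<gamma> (nat_dist i j))"
    unfolding square using int moment by (simp add: Bochner_Integration.integral_sum)
  also have "\<dots> \<le> (\<Sum>i\<in>S. \<Sum>j\<in>S. W\<^sup>2 * \<bar>\<gamma> (nat_dist i j)\<bar>)"
  proof (intro sum_mono)
    fix i j assume "i \<in> S" "j \<in> S"
    then have "\<bar>w i * w j\<bar> \<le> W * W" using weight by (intro abs_mult_le)
    then have "(w i * w j) * \<gamma> (nat_dist i j) \<le> (W * W) * \<bar>\<gamma> (nat_dist i j)\<bar>"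
      by (metis abs_ge_self abs_ge_zero abs_mult mult_right_mono order_trans)
    then show "(w i * w j) * \<gamma> (nat_dist i j) \<le> W\<^sup>2 * \<bar>\<gamma> (nat_dist i j)\<bar>"
      by (simp add: power2_eq_square)
  qed
  also have "\<dots> = W\<^sup>2 * (\<Sum>i\<in>S. \<Sum>j\<in>S. \<bar>\<gamma> (nat_dist i j)\<bar>)"
    by (simp add: sum_distrib_left)
  also have "\<dots> \<le> W\<^sup>2 * (2 * real L * (\<Sum>d<L. \<bar>\<gamma> d\<bar>))"
    unfolding S_def by (intro mult_left_mono sum_nat_dist_le) auto
  finally show "integral\<^sup>L M (\<lambda>x. (\<Sum>i\<in>S. w i * Z i x)\<^sup>2) \<le> 2 * W\<^sup>2 * real L * (\<Sum>d<L. \<bar>\<gamma> d\<bar>)"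
    by (simp add: algebra_simps)
qed

definition lag_moment :: "'a measure \<Rightarrow> (nat \<Rightarrow> 'a \<Rightarrow> real) \<Rightarrow> (real \<Rightarrow> real) \<Rightarrow> nat \<Rightarrow> real" where
  "lag_moment M Y phi d = integral\<^sup>L M (\<lambda>\<omega>. phi (Y 1 \<omega>) * phi (Y (Suc d) \<omega>))"

context
  fixes M :: "'a measure" and Y :: "nat \<Rightarrow> 'a \<Rightarrow> real" and phi :: "real \<Rightarrow> real"
  assumes M: "prob_space M" and Y: "\<And>i. Y i \<in> borel_measurable M"
    and stat: "strictly_stationary M Y"
    and phi: "phi \<in> borel_measurable borel"
    and phi_square_integrable: "integrable M (\<lambda>\<omega>. (phi (Y 1 \<omega>))\<^sup>2)"
begin

interpretation prob_space M by (rule M)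

lemma integral_mult_stationary:
  assumes "1 \<le> i" "1 \<le> j"
  shows "integrable M (\<lambda>\<omega>. phi (Y i \<omega>) * phi (Y j \<omega>))"
    and "integral\<^sup>L M (\<lambda>\<omega>. phi (Y i \<omega>) * phi (Y j \<omega>)) = lag_moment M Y phi (nat_dist i j)"
proof -
  have square: "integrable M (\<lambda>\<omega>. (phi (Y k \<omega>))\<^sup>2)" if "1 \<le> k" for k
    using square_integrable_stationary(1)[OF M Y stat phi phi_square_integrable phi order.refl that] .
  have meas: "(\<lambda>\<omega>. phi (Y k \<omega>)) \<in> borel_measurable M" for k
    using Y phi by measurable
  show "integrable M (\<lambda>\<omega>. phi (Y i \<omega>) * phi (Y j \<omega>))"
    using integrable_mult_square_integrable[OF meas meas square square] assms .
  show "integral\<^sup>L M (\<lambda>\<omega>. phi (Y i \<omega>) * phi (Y j \<omega>)) = lag_moment M Y phi (nat_dist i j)"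
  proof (cases "i \<le> j")
    case True
    then show ?thesis using stationary_integral_pair(1)[OF stat Y phi phi assms(1) True]
      unfolding lag_moment_def nat_dist_def by simp
  next
    case False
    then show ?thesis using stationary_integral_pair(1)[OF stat Y phi phi assms(2), of i]
      unfolding lag_moment_def nat_dist_def by (simp add: mult.commute)
  qed
qed

lemma integral_square_weighted_stationary_le:
  assumes "\<And>i. i \<in> {p+1..p+L} \<Longrightarrow> \<bar>w i\<bar> \<le> W"
  shows "integrable M (\<lambda>\<omega>. (\<Sum>i\<in>{p+1..p+L}. w i * phi (Y i \<omega>))\<^sup>2)"
    and "integral\<^sup>L M (\<lambda>\<omega>. (\<Sum>i\<in>{p+1..p+L}. w i * phi (Y i \<omega>))\<^sup>2)
      \<le> 2 * W\<^sup>2 * real L * (\<Sum>d<L. \<bar>lag_moment M Y phi d\<bar>)"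
  using integral_square_weighted_sum_le[where Z="\<lambda>i \<omega>. phi (Y i \<omega>)", OF _ _ assms]
    integral_mult_stationary by auto

lemma lag_moment_tendsto_0:
  assumes "integral\<^sup>L M (\<lambda>\<omega>. phi (Y 1 \<omega>)) = 0" and "beta_Y M Y \<longlonglongrightarrow> 0"
  shows "lag_moment M Y phi \<longlonglongrightarrow> 0"
proof -
  have "covar M (\<lambda>\<omega>. phi (Y 1 \<omega>)) (\<lambda>\<omega>. phi (Y (Suc k) \<omega>)) = lag_moment M Y phi k" for k
    using assms(1) stationary_integral_single(1)[OF stat Y phi, of "Suc k"]
    unfolding covar_def lag_moment_def by simp
  then show ?thesis
    using covar_tendsto_0[OF M Y stat phi phi_square_integrable assms(2)] by simp
qed

end

section \<open>Convergence in probability\<close>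

lemma abs_sum_squares_diff_le:
  fixes x y :: "nat \<Rightarrow> real"
  assumes "\<eta> > 0"
  shows "\<bar>(\<Sum>i\<in>S. (x i)\<^sup>2) - (\<Sum>i\<in>S. (y i)\<^sup>2)\<bar>
    \<le> \<eta> * (\<Sum>i\<in>S. (y i)\<^sup>2) + (1 + 1 / \<eta>) * (\<Sum>i\<in>S. (x i - y i)\<^sup>2)"
proof -
  have "\<bar>(x i)\<^sup>2 - (y i)\<^sup>2\<bar> \<le> \<eta> * (y i)\<^sup>2 + (1 + 1 / \<eta>) * (x i - y i)\<^sup>2" for i
  proof -
    define v where "v = x i - y i"
    have "(x i)\<^sup>2 - (y i)\<^sup>2 = 2 * (y i * v) + v\<^sup>2"
      unfolding v_def by (simp add: power2_eq_square algebra_simps)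
    moreover have "\<bar>y i * v\<bar> \<le> (\<eta> * (y i)\<^sup>2 + v\<^sup>2 / \<eta>) / 2"
      by (rule young_ineq[OF assms])
    moreover have "\<bar>2 * w + q\<bar> \<le> E + q" if "\<bar>w\<bar> \<le> E / 2" "0 \<le> q" for w q E :: real
      using that by arith
    ultimately have "\<bar>(x i)\<^sup>2 - (y i)\<^sup>2\<bar> \<le> \<eta> * (y i)\<^sup>2 + v\<^sup>2 / \<eta> + v\<^sup>2"
      by (metis zero_le_power2)
    then show ?thesis unfolding v_def by (simp add: algebra_simps)
  qed
  then have "\<bar>\<Sum>i\<in>S. (x i)\<^sup>2 - (y i)\<^sup>2\<bar> \<le> (\<Sum>i\<in>S. \<eta> * (y i)\<^sup>2 + (1 + 1 / \<eta>) * (x i - y i)\<^sup>2)"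
    by (intro order_trans[OF sum_abs] sum_mono)
  then show ?thesis
    by (simp add: sum_subtractf sum.distrib sum_distrib_left)
qed

context prob_space
begin

lemma measure_deviation_le:
  fixes X T V :: "'a \<Rightarrow> real"
  assumes X: "X \<in> borel_measurable M"
    and integrable: "integrable M T" "integrable M (\<lambda>\<omega>. (T \<omega> - I)\<^sup>2)" "integrable M V"
    and deviation: "\<And>\<omega>. \<omega> \<in> space M \<Longrightarrow> \<bar>X \<omega> - T \<omega>\<bar> \<le> \<eta> * T \<omega> + (1 + 1 / \<eta>) * V \<omega>"
    and \<rho>: "\<rho> > 0" and \<epsilon>: "\<epsilon> > 0"
  shows "measure M {\<omega>\<in>space M. \<bar>X \<omega> - I\<bar> > \<epsilon>}
    \<le> (integral\<^sup>L M (\<lambda>\<omega>. (T \<omega> - I)\<^sup>2) / (2 * \<rho>) + \<rho> / 2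
        + \<eta> * integral\<^sup>L M T + (1 + 1 / \<eta>) * integral\<^sup>L M V) / \<epsilon>"
proof -
  define Z where "Z \<omega> = (T \<omega> - I)\<^sup>2 / (2 * \<rho>) + \<rho> / 2 + \<eta> * T \<omega> + (1 + 1 / \<eta>) * V \<omega>" for \<omega>
  have Z: "integrable M Z" unfolding Z_def using integrable by simp
  have dominated: "\<bar>X \<omega> - I\<bar> \<le> Z \<omega>" if "\<omega> \<in> space M" for \<omega>
  proof -
    have "\<bar>(T \<omega> - I) * 1\<bar> \<le> ((1 / \<rho>) * (T \<omega> - I)\<^sup>2 + 1\<^sup>2 / (1 / \<rho>)) / 2"
      using \<rho> by (intro young_ineq) simp
    moreover have "(T \<omega> - I)\<^sup>2 / (2 * \<rho>) = (T \<omega> - I)\<^sup>2 / \<rho> / 2" by simp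
    ultimately show ?thesis
      using deviation[OF that] abs_triangle_ineq[of "X \<omega> - T \<omega>" "T \<omega> - I"] unfolding Z_def by simp
  qed
  have "measure M {\<omega>\<in>space M. \<bar>X \<omega> - I\<bar> > \<epsilon>} \<le> measure M {\<omega>\<in>space M. Z \<omega> \<ge> \<epsilon>}"
    using dominated Z X by (intro finite_measure_mono) force+
  also have "\<dots> \<le> integral\<^sup>L M Z / \<epsilon>"
    using dominated Z \<epsilon> by (intro integral_Markov_inequality_measure) force+
  also have "integral\<^sup>L M Z = integral\<^sup>L M (\<lambda>\<omega>. (T \<omega> - I)\<^sup>2) / (2 * \<rho>) + \<rho> / 2
      + \<eta> * integral\<^sup>L M T + (1 + 1 / \<eta>) * integral\<^sup>L M V"
    unfolding Z_def using integrable by (simp add: prob_space)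
  finally show ?thesis .
qed

text \<open>The scale \<open>\<rho>\<close> and the relative error \<open>\<eta>\<close> are chosen proportional to \<open>\<epsilon> \<delta>\<close>, so that
  each of the four terms of the Markov bound in \<open>measure_deviation_le\<close> eventually
  contributes at most \<open>\<delta> / 4\<close>.\<close>

lemma tendsto_measure_deviation_0:
  fixes X T V :: "'i \<Rightarrow> 'a \<Rightarrow> real" and F :: "'i filter"
  assumes X: "\<And>n. X n \<in> borel_measurable M"
    and integrable: "eventually (\<lambda>n. integrable M (T n) \<and> integrable M (\<lambda>\<omega>. (T n \<omega> - I)\<^sup>2)
        \<and> integrable M (V n)) F"
    and deviation: "\<And>n \<omega> \<eta>. \<omega> \<in> space M \<Longrightarrow> \<eta> > 0 \<Longrightarrow>
        \<bar>X n \<omega> - T n \<omega>\<bar> \<le> \<eta> * T n \<omega> + (1 + 1 / \<eta>) * V n \<omega>"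
    and T_bounded: "\<And>n. integral\<^sup>L M (T n) \<le> B"
    and T_L2: "((\<lambda>n. integral\<^sup>L M (\<lambda>\<omega>. (T n \<omega> - I)\<^sup>2)) \<longlongrightarrow> 0) F"
    and V_L1: "((\<lambda>n. integral\<^sup>L M (V n)) \<longlongrightarrow> 0) F"
    and \<epsilon>: "\<epsilon> > 0"
  shows "((\<lambda>n. measure M {\<omega>\<in>space M. \<bar>X n \<omega> - I\<bar> > \<epsilon>}) \<longlongrightarrow> 0) F"
proof (rule order_tendstoI)
  fix a :: real assume "a < 0"
  then show "eventually (\<lambda>n. a < measure M {\<omega>\<in>space M. \<bar>X n \<omega> - I\<bar> > \<epsilon>}) F"
    by (simp add: less_le_trans[OF _ measure_nonneg])
next
  fix \<delta> :: real assume \<delta>: "0 < \<delta>"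
  define \<rho> where "\<rho> = \<epsilon> * \<delta> / 2"
  define \<eta> where "\<eta> = \<epsilon> * \<delta> / (4 * (\<bar>B\<bar> + 1))"
  have \<rho>: "\<rho> > 0" and \<eta>: "\<eta> > 0" unfolding \<rho>_def \<eta>_def using \<epsilon> \<delta> by auto
  have \<eta>B: "\<eta> * B < \<epsilon> * \<delta> / 4"
  proof -
    have "\<eta> * B < \<eta> * (\<bar>B\<bar> + 1)" using \<eta> by (simp add: mult_strict_left_mono)
    also have "\<dots> = \<epsilon> * \<delta> / 4"
      unfolding \<eta>_def by (simp add: field_simps add_pos_nonneg)
    finally show ?thesis .
  qed
  have "eventually (\<lambda>n. integral\<^sup>L M (\<lambda>\<omega>. (T n \<omega> - I)\<^sup>2) < \<rho> * (\<epsilon> * \<delta> / 2)) F"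
    using T_L2 \<rho> \<epsilon> \<delta> by (intro order_tendstoD(2)) auto
  moreover have "eventually (\<lambda>n. integral\<^sup>L M (V n) < \<epsilon> * \<delta> / (4 * (1 + 1 / \<eta>))) F"
    using V_L1 \<eta> \<epsilon> \<delta> by (intro order_tendstoD(2)) (auto intro!: divide_pos_pos add_pos_pos)
  ultimately show "eventually (\<lambda>n. measure M {\<omega>\<in>space M. \<bar>X n \<omega> - I\<bar> > \<epsilon>} < \<delta>) F"
    using integrable
  proof eventually_elim
    case (elim n)
    have "integral\<^sup>L M (\<lambda>\<omega>. (T n \<omega> - I)\<^sup>2) / (2 * \<rho>) < \<epsilon> * \<delta> / 4"
      using elim(1) \<rho> by (simp add: divide_less_eq field_simps)
    moreover have "\<eta> * integral\<^sup>L M (T n) < \<epsilon> * \<delta> / 4"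
      using \<eta>B mult_left_mono[OF T_bounded[of n], of \<eta>] \<eta> by linarith
    moreover have "(1 + 1 / \<eta>) * integral\<^sup>L M (V n) < \<epsilon> * \<delta> / 4"
      using elim(2) \<eta> by (simp add: field_simps)
    ultimately have "integral\<^sup>L M (\<lambda>\<omega>. (T n \<omega> - I)\<^sup>2) / (2 * \<rho>) + \<rho> / 2
        + \<eta> * integral\<^sup>L M (T n) + (1 + 1 / \<eta>) * integral\<^sup>L M (V n) < \<delta> * \<epsilon>"
      using \<rho>_def by (simp add: mult.commute)
    moreover have "measure M {\<omega>\<in>space M. \<bar>X n \<omega> - I\<bar> > \<epsilon>}
      \<le> (integral\<^sup>L M (\<lambda>\<omega>. (T n \<omega> - I)\<^sup>2) / (2 * \<rho>) + \<rho> / 2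
        + \<eta> * integral\<^sup>L M (T n) + (1 + 1 / \<eta>) * integral\<^sup>L M (V n)) / \<epsilon>"
      using elim(3) by (intro measure_deviation_le[OF X _ _ _ deviation[OF _ \<eta>] \<rho> \<epsilon>]) auto
    ultimately show ?case
      using pos_divide_less_eq[OF \<epsilon>] by (meson le_less_trans)
  qed
qed

end

section \<open>The block-demeaned variance estimator\<close>

lemma power4_le_one_plus_powr:
  fixes y \<theta> :: real
  assumes "\<theta> > 0"
  shows "y ^ 4 \<le> 1 + \<bar>y\<bar> powr (4 + 2 * \<theta>)"
proof (cases "\<bar>y\<bar> \<le> 1")
  case True
  then have "\<bar>y\<bar> ^ 4 \<le> 1 ^ 4" by (intro power_mono) auto
  then show ?thesis by (simp add: power_abs[symmetric]) (smt (verit) powr_ge_zero)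
next
  case False
  then have "y ^ 4 = \<bar>y\<bar> powr (real 4)" by (simp add: powr_realpow power_abs[symmetric] power_even_abs)
  also have "\<dots> \<le> \<bar>y\<bar> powr (4 + 2 * \<theta>)" using False assms by (intro powr_mono) auto
  finally show ?thesis by simp
qed

lemma filterlim_powr_sequentially:
  assumes "a > 0"
  shows "filterlim (\<lambda>n. real n powr a) at_top sequentially"
  unfolding filterlim_at_top
proof
  fix B :: real
  define B' where "B' = max B 1"
  obtain N :: nat where N: "B' powr (1 / a) \<le> real N" using real_arch_simple by blast
  have "B \<le> real n powr a" if "n \<ge> N" for n
  proof -
    have "B' = (B' powr (1 / a)) powr a" using assms by (simp add: B'_def powr_powr)
    also have "\<dots> \<le> real n powr a" using N that assms by (intro powr_mono2) auto
    finally show ?thesis unfolding B'_def by simp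
  qed
  then show "eventually (\<lambda>n. B \<le> real n powr a) sequentially"
    unfolding eventually_sequentially by blast
qed

definition sigma_known_trend :: "(real \<Rightarrow> real) \<Rightarrow> (nat \<Rightarrow> 'a \<Rightarrow> real) \<Rightarrow> nat \<Rightarrow> 'a \<Rightarrow> real" where
  "sigma_known_trend sig Y n \<omega> = (1 / real n) * (\<Sum>i = 1..n. (sig (real i / real n) * Y i \<omega>)\<^sup>2)"

definition demeaning_error ::
    "(real \<Rightarrow> real) \<Rightarrow> (real \<Rightarrow> real) \<Rightarrow> (nat \<Rightarrow> 'a \<Rightarrow> real) \<Rightarrow> real \<Rightarrow> nat \<Rightarrow> 'a \<Rightarrow> real" where
  "demeaning_error sig mu Y s n \<omega> =
     (1 / real n) * (\<Sum>i = 1..n. (demeaned sig mu Y s n i \<omega> - sig (real i / real n) * Y i \<omega>)\<^sup>2)"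

lemma abs_sigmaH2_sigma_known_trend_le:
  assumes "\<eta> > 0"
  shows "\<bar>sigmaH2 sig mu Y s n \<omega> - sigma_known_trend sig Y n \<omega>\<bar>
    \<le> \<eta> * sigma_known_trend sig Y n \<omega> + (1 + 1 / \<eta>) * demeaning_error sig mu Y s n \<omega>"
proof -
  let ?x = "\<lambda>i. demeaned sig mu Y s n i \<omega>" and ?y = "\<lambda>i. sig (real i / real n) * Y i \<omega>"
  have "\<bar>sigmaH2 sig mu Y s n \<omega> - sigma_known_trend sig Y n \<omega>\<bar>
      = \<bar>(\<Sum>i = 1..n. (?x i)\<^sup>2) - (\<Sum>i = 1..n. (?y i)\<^sup>2)\<bar> / real n"
    unfolding sigmaH2_def sigma_known_trend_def by (simp add: diff_divide_distrib[symmetric])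
  also have "\<dots> \<le> (\<eta> * (\<Sum>i = 1..n. (?y i)\<^sup>2) + (1 + 1 / \<eta>) * (\<Sum>i = 1..n. (?x i - ?y i)\<^sup>2)) / real n"
    by (intro divide_right_mono abs_sum_squares_diff_le assms) simp
  finally show ?thesis
    unfolding sigma_known_trend_def demeaning_error_def by (simp add: add_divide_distrib)
qed

lemma block_bounds:
  fixes n l i :: nat
  assumes l: "l \<ge> 1" and dvd: "l dvd n" and i: "i \<in> {1..n}"
  defines "p \<equiv> (i - 1) div l * l"
  shows "i \<in> {p+1..p+l}" "\<And>r. r \<in> {p+1..p+l} \<Longrightarrow> r \<in> {1..n}"
    "\<And>r. r \<in> {p+1..p+l} \<Longrightarrow> \<bar>real r - real i\<bar> \<le> real l"
proof -
  obtain q where q: "n = l * q" using dvd by auto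
  have "i - 1 < l * q" using i q by auto
  then have "(i - 1) div l < q" by (simp add: less_mult_imp_div_less mult.commute)
  then have "(i - 1) div l + 1 \<le> q" by simp
  then have "((i - 1) div l + 1) * l \<le> q * l" by (rule mult_right_mono) simp
  then have "p + l \<le> n" unfolding p_def q by (simp add: algebra_simps)
  moreover have "p \<le> i - 1" unfolding p_def by (simp add: div_times_less_eq_dividend)
  moreover have "i - 1 < p + l"
    using mod_less_divisor[of l "i - 1"] l div_mult_mod_eq[of "i - 1" l] unfolding p_def by linarith
  ultimately show "i \<in> {p+1..p+l}" "\<And>r. r \<in> {p+1..p+l} \<Longrightarrow> r \<in> {1..n}"
    "\<And>r. r \<in> {p+1..p+l} \<Longrightarrow> \<bar>real r - real i\<bar> \<le> real l"
    using i by auto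
qed

lemma demeaned_eq_block_mean:
  fixes n l i :: nat
  assumes "blk s n = l"
  defines "p \<equiv> (i - 1) div l * l"
  shows "demeaned sig mu Y s n i \<omega>
    = obs sig mu Y n i \<omega> - (1 / real l) * (\<Sum>r\<in>{p+1..p+l}. obs sig mu Y n r \<omega>)"
proof -
  have "((i - 1) div l + 1 - 1) * l + 1 = p + 1" "((i - 1) div l + 1) * l = p + l"
    unfolding p_def by (simp_all add: algebra_simps)
  then show ?thesis unfolding demeaned_def Let_def assms(1) by (simp add: add.commute)
qed

lemma abs_block_trend_deviation_le:
  assumes lip: "C-lipschitz_on {0..1} mu" and n: "n \<ge> 1" and l: "l \<ge> 1" "l dvd n" and i: "i \<in> {1..n}"
  defines "p \<equiv> (i - 1) div l * l"
  shows "\<bar>mu (real i / real n) - (1 / real l) * (\<Sum>r\<in>{p+1..p+l}. mu (real r / real n))\<bar>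
    \<le> C * real l / real n"
proof -
  note block = block_bounds[OF l i, folded p_def]
  have "\<bar>mu (real i / real n) - mu (real r / real n)\<bar> \<le> C * real l / real n"
    if r: "r \<in> {p+1..p+l}" for r
  proof -
    have "real i / real n \<in> {0..1}" "real r / real n \<in> {0..1}" using i block(2)[OF r] by auto
    then have "\<bar>mu (real i / real n) - mu (real r / real n)\<bar> \<le> C * \<bar>real i / real n - real r / real n\<bar>"
      using lipschitz_onD[OF lip] by (simp add: dist_real_def)
    also have "\<bar>real i / real n - real r / real n\<bar> = \<bar>real r - real i\<bar> / real n"
      by (simp add: abs_minus_commute diff_divide_distrib[symmetric])
    also have "C * (\<bar>real r - real i\<bar> / real n) \<le> C * (real l / real n)"
      using block(3)[OF r] lipschitz_on_nonneg[OF lip] by (intro mult_left_mono divide_right_mono) auto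
    finally show ?thesis by simp
  qed
  then have "\<bar>\<Sum>r\<in>{p+1..p+l}. mu (real i / real n) - mu (real r / real n)\<bar>
      \<le> (\<Sum>r\<in>{p+1..p+l}. C * real l / real n)"
    by (intro order_trans[OF sum_abs] sum_mono)
  then have "\<bar>\<Sum>r\<in>{p+1..p+l}. mu (real i / real n) - mu (real r / real n)\<bar> \<le> real l * (C * real l / real n)"
    by simp
  moreover have "mu (real i / real n) - (1 / real l) * (\<Sum>r\<in>{p+1..p+l}. mu (real r / real n))
      = (\<Sum>r\<in>{p+1..p+l}. mu (real i / real n) - mu (real r / real n)) / real l"
    using l by (simp add: sum_subtractf field_simps)
  ultimately have "\<bar>mu (real i / real n) - (1 / real l) * (\<Sum>r\<in>{p+1..p+l}. mu (real r / real n))\<bar>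
      \<le> real l * (C * real l / real n) / real l"
    by (metis abs_divide abs_of_nat divide_right_mono of_nat_0_le_iff)
  also have "\<dots> = C * real l / real n" using l by simp
  finally show ?thesis .
qed

context
  fixes M :: "'a measure" and Y :: "nat \<Rightarrow> 'a \<Rightarrow> real"
  assumes M: "prob_space M" and Y: "\<And>i. Y i \<in> borel_measurable M"
    and stat: "strictly_stationary M Y"
    and var1: "integral\<^sup>L M (\<lambda>\<omega>. (Y 1 \<omega>)\<^sup>2) = 1"
    and fourth_moment: "integrable M (\<lambda>\<omega>. (Y 1 \<omega>) ^ 4)"
begin

interpretation prob_space M by (rule M)

lemma square_integrable_Y1: "integrable M (\<lambda>\<omega>. (Y 1 \<omega>)\<^sup>2)"
  using var1 not_integrable_integral_eq by fastforce

lemma square_integrable_centred_square: "integrable M (\<lambda>\<omega>. ((Y 1 \<omega>)\<^sup>2 - 1)\<^sup>2)"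
  using fourth_moment square_integrable_Y1
  by (simp add: power2_diff power_mult[symmetric] power2_eq_square[of "1::real"])

lemma integral_square_Y:
  assumes "1 \<le> i"
  shows "integrable M (\<lambda>\<omega>. (Y i \<omega>)\<^sup>2)" "integral\<^sup>L M (\<lambda>\<omega>. (Y i \<omega>)\<^sup>2) = 1"
  using stationary_integral_single[OF stat Y _ assms, of "\<lambda>x. x\<^sup>2"] square_integrable_Y1 var1 by simp_all

lemma integral_sigma_known_trend:
  shows "integrable M (sigma_known_trend sig Y n)"
    and "integral\<^sup>L M (sigma_known_trend sig Y n) = (\<Sum>i = 1..n. (sig (real i / real n))\<^sup>2) / real n"
proof -
  have known_trend: "sigma_known_trend sig Y n = (\<lambda>\<omega>. \<Sum>i = 1..n. (sig (real i / real n))\<^sup>2 / real n * (Y i \<omega>)\<^sup>2)"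
    unfolding sigma_known_trend_def by (simp add: fun_eq_iff sum_distrib_left power_mult_distrib)
  show "integrable M (sigma_known_trend sig Y n)"
    unfolding known_trend
    by (intro Bochner_Integration.integrable_sum integrable_mult_right integral_square_Y(1)) simp
  show "integral\<^sup>L M (sigma_known_trend sig Y n) = (\<Sum>i = 1..n. (sig (real i / real n))\<^sup>2) / real n"
    unfolding known_trend using integral_square_Y by (simp add: sum_divide_distrib)
qed

lemma integral_sigma_known_trend_deviation_le:
  fixes sig :: "real \<Rightarrow> real" and n :: nat and K I :: real
  assumes K: "\<And>z. z \<in> {0..1} \<Longrightarrow> \<bar>sig z\<bar> \<le> K"
  defines "R \<equiv> (\<Sum>i = 1..n. (sig (real i / real n))\<^sup>2) / real n"
  shows "integrable M (\<lambda>\<omega>. (sigma_known_trend sig Y n \<omega> - I)\<^sup>2)"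
    and "integral\<^sup>L M (\<lambda>\<omega>. (sigma_known_trend sig Y n \<omega> - I)\<^sup>2)
      \<le> 4 * K ^ 4 * ((\<Sum>d<n. \<bar>lag_moment M Y (\<lambda>x. x\<^sup>2 - 1) d\<bar>) / real n) + 2 * (R - I)\<^sup>2"
proof -
  define W where "W \<omega> = (\<Sum>i\<in>{0+1..0+n}. (sig (real i / real n))\<^sup>2 / real n * ((Y i \<omega>)\<^sup>2 - 1))" for \<omega>
  have weight: "\<bar>(sig (real i / real n))\<^sup>2 / real n\<bar> \<le> K\<^sup>2 / real n" if "i \<in> {0+1..0+n}" for i
  proof -
    have "\<bar>sig (real i / real n)\<bar> \<le> K" using that by (intro K) auto
    then have "\<bar>sig (real i / real n)\<bar>\<^sup>2 \<le> K\<^sup>2" by (intro power_mono) auto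
    then show ?thesis by (simp add: divide_right_mono)
  qed
  have centred_meas: "(\<lambda>x::real. x\<^sup>2 - 1) \<in> borel_measurable borel" by simp
  note W_moment = integral_square_weighted_stationary_le[OF M Y stat centred_meas
      square_integrable_centred_square,
      where p=0 and L=n and w="\<lambda>i. (sig (real i / real n))\<^sup>2 / real n" and W="K\<^sup>2 / real n",
      OF weight, folded W_def]
  have "2 * (K\<^sup>2 / real n)\<^sup>2 * real n = 2 * K ^ 4 / real n"
    by (cases "n = 0") (simp_all add: power2_eq_square power4_eq_xxxx)
  then have W: "integrable M (\<lambda>\<omega>. (W \<omega>)\<^sup>2)"
    "integral\<^sup>L M (\<lambda>\<omega>. (W \<omega>)\<^sup>2) \<le> 2 * K ^ 4 * ((\<Sum>d<n. \<bar>lag_moment M Y (\<lambda>x. x\<^sup>2 - 1) d\<bar>) / real n)"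
    using W_moment by (simp_all add: mult.assoc)
  have split: "sigma_known_trend sig Y n \<omega> - I = W \<omega> + (R - I)" for \<omega>
    using integral_square_Y
    unfolding sigma_known_trend_def W_def R_def
    by (simp add: right_diff_distrib sum_subtractf sum_distrib_left sum_divide_distrib power_mult_distrib)
  have bound: "(sigma_known_trend sig Y n \<omega> - I)\<^sup>2 \<le> 2 * (W \<omega>)\<^sup>2 + 2 * (R - I)\<^sup>2" for \<omega>
    unfolding split by (rule square_add_le)
  have W_meas: "W \<in> borel_measurable M" unfolding W_def using Y by measurable
  show int: "integrable M (\<lambda>\<omega>. (sigma_known_trend sig Y n \<omega> - I)\<^sup>2)"
    unfolding split using W(1) W_meas square_integrable_imp_integrable[OF W_meas W(1)]
    by (simp add: power2_sum)
  have "integral\<^sup>L M (\<lambda>\<omega>. (sigma_known_trend sig Y n \<omega> - I)\<^sup>2) \<le> integral\<^sup>L M (\<lambda>\<omega>. 2 * (W \<omega>)\<^sup>2 + 2 * (R - I)\<^sup>2)"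
    using int W(1) bound by (intro integral_mono) auto
  also have "\<dots> = 2 * integral\<^sup>L M (\<lambda>\<omega>. (W \<omega>)\<^sup>2) + 2 * (R - I)\<^sup>2"
    using W(1) by (simp add: prob_space)
  finally show "integral\<^sup>L M (\<lambda>\<omega>. (sigma_known_trend sig Y n \<omega> - I)\<^sup>2)
      \<le> 4 * K ^ 4 * ((\<Sum>d<n. \<bar>lag_moment M Y (\<lambda>x. x\<^sup>2 - 1) d\<bar>) / real n) + 2 * (R - I)\<^sup>2"
    using W(2) by linarith
qed

lemma sigma_known_trend_L2_tendsto:
  assumes cadlag: "cadlag01 sig" and K: "\<And>z. z \<in> {0..1} \<Longrightarrow> \<bar>sig z\<bar> \<le> K"
    and beta: "beta_Y M Y \<longlonglongrightarrow> 0"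
  defines "I \<equiv> integral {0..1} (\<lambda>z. (sig z)\<^sup>2)"
  shows "(\<lambda>n. integral\<^sup>L M (\<lambda>\<omega>. (sigma_known_trend sig Y n \<omega> - I)\<^sup>2)) \<longlonglongrightarrow> 0"
proof -
  let ?R = "\<lambda>n. (\<Sum>i = 1..n. (sig (real i / real n))\<^sup>2) / real n"
  let ?c = "lag_moment M Y (\<lambda>x. x\<^sup>2 - 1)"
  have "?R \<longlonglongrightarrow> I"
    unfolding I_def
  proof (rule riemann_sum_tendsto_integral)
    show "\<bar>(sig z)\<^sup>2\<bar> \<le> K\<^sup>2" if "z \<in> {0..1}" for z
    proof -
      have "\<bar>sig z\<bar>\<^sup>2 \<le> K\<^sup>2" using K[OF that] by (intro power_mono) auto
      then show ?thesis by simp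
    qed
    show "continuous (at_right z) (\<lambda>z. (sig z)\<^sup>2)" if "z \<in> {0..<1}" for z
      using cadlag that unfolding cadlag01_def by (auto intro!: continuous_intros)
  qed
  moreover have "integral\<^sup>L M (\<lambda>\<omega>. (Y 1 \<omega>)\<^sup>2 - 1) = 0"
    using var1 square_integrable_Y1 by (simp add: prob_space)
  then have "?c \<longlonglongrightarrow> 0"
    using lag_moment_tendsto_0[OF M Y stat _ square_integrable_centred_square _ beta] by simp
  then have "(\<lambda>n. (\<Sum>d<n. \<bar>?c d\<bar>) / real n) \<longlonglongrightarrow> 0"
    by (rule cesaro_abs_tendsto_0)
  ultimately have "(\<lambda>n. 4 * K ^ 4 * ((\<Sum>d<n. \<bar>?c d\<bar>) / real n) + 2 * (?R n - I)\<^sup>2)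
      \<longlonglongrightarrow> 4 * K ^ 4 * 0 + 2 * (I - I)\<^sup>2"
    by (intro tendsto_intros)
  then have bound_tendsto: "(\<lambda>n. 4 * K ^ 4 * ((\<Sum>d<n. \<bar>?c d\<bar>) / real n) + 2 * (?R n - I)\<^sup>2) \<longlonglongrightarrow> 0"
    by simp
  have "\<forall>n. integral\<^sup>L M (\<lambda>\<omega>. (sigma_known_trend sig Y n \<omega> - I)\<^sup>2)
      \<le> 4 * K ^ 4 * ((\<Sum>d<n. \<bar>?c d\<bar>) / real n) + 2 * (?R n - I)\<^sup>2"
    using integral_sigma_known_trend_deviation_le(2)[where sig=sig and K=K and I=I, OF K] by blast
  moreover have "\<forall>n. 0 \<le> integral\<^sup>L M (\<lambda>\<omega>. (sigma_known_trend sig Y n \<omega> - I)\<^sup>2)"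
    by simp
  ultimately show ?thesis
    by (intro tendsto_sandwich[OF always_eventually always_eventually tendsto_const bound_tendsto])
qed

lemma integral_demeaned_deviation_le:
  assumes n: "n \<ge> 1" and l: "l \<ge> 1" "blk s n = l" "l dvd n" and i: "i \<in> {1..n}"
    and K: "\<And>z. z \<in> {0..1} \<Longrightarrow> \<bar>sig z\<bar> \<le> K" and lip: "C-lipschitz_on {0..1} mu"
  defines "v \<equiv> \<lambda>\<omega>. demeaned sig mu Y s n i \<omega> - sig (real i / real n) * Y i \<omega>"
  shows "integrable M (\<lambda>\<omega>. (v \<omega>)\<^sup>2)"
    and "integral\<^sup>L M (\<lambda>\<omega>. (v \<omega>)\<^sup>2)
      \<le> 2 * (C * real l / real n)\<^sup>2 + 4 * K\<^sup>2 * ((\<Sum>d<l. \<bar>lag_moment M Y (\<lambda>x. x) d\<bar>) / real l)"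
proof -
  define p where "p = (i - 1) div l * l"
  define x where "x = mu (real i / real n) - (1 / real l) * (\<Sum>r\<in>{p+1..p+l}. mu (real r / real n))"
  define A where "A \<omega> = (\<Sum>r\<in>{p+1..p+l}. sig (real r / real n) / real l * Y r \<omega>)" for \<omega>
  note block = block_bounds[OF l(1,3) i, folded p_def]
  have v: "v \<omega> = x - A \<omega>" for \<omega>
    unfolding v_def demeaned_eq_block_mean[OF l(2)] x_def A_def obs_def p_def
    by (simp add: sum.distrib sum_distrib_left algebra_simps sum_divide_distrib)
  have "\<bar>x\<bar> \<le> C * real l / real n"
    unfolding x_def p_def using abs_block_trend_deviation_le[OF lip n l(1,3) i] by simp
  then have x: "x\<^sup>2 \<le> (C * real l / real n)\<^sup>2"
    by (metis abs_ge_zero power2_abs power_mono)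
  have weight: "\<bar>sig (real r / real n) / real l\<bar> \<le> K / real l" if "r \<in> {p+1..p+l}" for r
    using K[of "real r / real n"] block(2)[OF that] by (simp add: divide_right_mono)
  have id_meas: "(\<lambda>x::real. x) \<in> borel_measurable borel" by simp
  note A_moment = integral_square_weighted_stationary_le[OF M Y stat id_meas square_integrable_Y1,
      where p=p and L=l and w="\<lambda>r. sig (real r / real n) / real l" and W="K / real l",
      OF weight, folded A_def]
  have "2 * (K / real l)\<^sup>2 * real l = 2 * K\<^sup>2 / real l"
    using l by (simp add: power2_eq_square)
  then have A: "integrable M (\<lambda>\<omega>. (A \<omega>)\<^sup>2)"
    "integral\<^sup>L M (\<lambda>\<omega>. (A \<omega>)\<^sup>2) \<le> 2 * K\<^sup>2 * ((\<Sum>d<l. \<bar>lag_moment M Y (\<lambda>x. x) d\<bar>) / real l)"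
    using A_moment by (simp_all add: mult.assoc)
  have A_meas: "A \<in> borel_measurable M" unfolding A_def using Y by measurable
  have bound: "(v \<omega>)\<^sup>2 \<le> 2 * x\<^sup>2 + 2 * (A \<omega>)\<^sup>2" for \<omega>
    using square_add_le[of x "- A \<omega>"] by (simp add: v)
  show int: "integrable M (\<lambda>\<omega>. (v \<omega>)\<^sup>2)"
    unfolding v using A(1) square_integrable_imp_integrable[OF A_meas A(1)]
    by (simp add: power2_diff)
  have "integral\<^sup>L M (\<lambda>\<omega>. (v \<omega>)\<^sup>2) \<le> integral\<^sup>L M (\<lambda>\<omega>. 2 * x\<^sup>2 + 2 * (A \<omega>)\<^sup>2)"
    using int A(1) bound by (intro integral_mono) auto
  also have "\<dots> = 2 * x\<^sup>2 + 2 * integral\<^sup>L M (\<lambda>\<omega>. (A \<omega>)\<^sup>2)"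
    using A(1) by (simp add: prob_space)
  finally show "integral\<^sup>L M (\<lambda>\<omega>. (v \<omega>)\<^sup>2)
      \<le> 2 * (C * real l / real n)\<^sup>2 + 4 * K\<^sup>2 * ((\<Sum>d<l. \<bar>lag_moment M Y (\<lambda>x. x) d\<bar>) / real l)"
    using x A(2) by linarith
qed

lemma integral_demeaning_error_le:
  assumes n: "n \<ge> 1" and l: "l \<ge> 1" "blk s n = l" "l dvd n"
    and K: "\<And>z. z \<in> {0..1} \<Longrightarrow> \<bar>sig z\<bar> \<le> K" and lip: "C-lipschitz_on {0..1} mu"
  shows "integrable M (demeaning_error sig mu Y s n)"
    and "integral\<^sup>L M (demeaning_error sig mu Y s n)
      \<le> 2 * (C * real l / real n)\<^sup>2 + 4 * K\<^sup>2 * ((\<Sum>d<l. \<bar>lag_moment M Y (\<lambda>x. x) d\<bar>) / real l)"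
proof -
  note each = integral_demeaned_deviation_le[where sig=sig and K=K and mu=mu and C=C and s=s, OF n l _ K lip]
  show "integrable M (demeaning_error sig mu Y s n)"
    unfolding demeaning_error_def
    by (intro integrable_mult_right Bochner_Integration.integrable_sum each(1)) simp
  have "integral\<^sup>L M (demeaning_error sig mu Y s n)
      = (\<Sum>i = 1..n. integral\<^sup>L M (\<lambda>\<omega>. (demeaned sig mu Y s n i \<omega> - sig (real i / real n) * Y i \<omega>)\<^sup>2)) / real n"
    unfolding demeaning_error_def using each(1) by (simp add: Bochner_Integration.integral_sum)
  also have "\<dots> \<le> (\<Sum>i = 1..n. 2 * (C * real l / real n)\<^sup>2
      + 4 * K\<^sup>2 * ((\<Sum>d<l. \<bar>lag_moment M Y (\<lambda>x. x) d\<bar>) / real l)) / real n"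
    using each(2) by (intro divide_right_mono sum_mono) auto
  also have "\<dots> = 2 * (C * real l / real n)\<^sup>2 + 4 * K\<^sup>2 * ((\<Sum>d<l. \<bar>lag_moment M Y (\<lambda>x. x) d\<bar>) / real l)"
    using n by simp
  finally show "integral\<^sup>L M (demeaning_error sig mu Y s n)
      \<le> 2 * (C * real l / real n)\<^sup>2 + 4 * K\<^sup>2 * ((\<Sum>d<l. \<bar>lag_moment M Y (\<lambda>x. x) d\<bar>) / real l)" .
qed

lemma demeaning_error_tendsto_0:
  assumes s: "0 < s" "s < 1" and mean0: "integral\<^sup>L M (Y 1) = 0" and beta: "beta_Y M Y \<longlonglongrightarrow> 0"
    and K: "\<And>z. z \<in> {0..1} \<Longrightarrow> \<bar>sig z\<bar> \<le> K" and lip: "C-lipschitz_on {0..1} mu"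
  shows "((\<lambda>n. integral\<^sup>L M (demeaning_error sig mu Y s n)) \<longlongrightarrow> 0)
    (sequentially \<sqinter> principal {n. \<exists>l::nat. real l = real n powr s \<and> l dvd n})"
proof -
  let ?F = "sequentially \<sqinter> principal {n. \<exists>l::nat. real l = real n powr s \<and> l dvd n}"
  let ?c = "lag_moment M Y (\<lambda>x. x)"
  define g where "g n = 2 * (C * real n powr (s - 1))\<^sup>2
    + 4 * K\<^sup>2 * ((\<Sum>d<blk s n. \<bar>?c d\<bar>) / real (blk s n))" for n
  have "?c \<longlonglongrightarrow> 0"
    using lag_moment_tendsto_0[OF M Y stat _ square_integrable_Y1 _ beta] mean0 by simp
  then have "(\<lambda>L. (\<Sum>d<L. \<bar>?c d\<bar>) / real L) \<longlonglongrightarrow> 0"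
    by (rule cesaro_abs_tendsto_0)
  moreover have "filterlim (blk s) at_top sequentially"
    unfolding blk_def
    by (rule filterlim_compose[OF filterlim_nat_sequentially
          filterlim_compose[OF filterlim_floor_sequentially filterlim_powr_sequentially[OF s(1)]]])
  ultimately have "(\<lambda>n. (\<Sum>d<blk s n. \<bar>?c d\<bar>) / real (blk s n)) \<longlonglongrightarrow> 0"
    by (rule filterlim_compose)
  moreover have "(\<lambda>n. real n powr (s - 1)) \<longlonglongrightarrow> 0"
    using s(2) by (intro tendsto_neg_powr filterlim_real_sequentially) simp
  ultimately have "g \<longlonglongrightarrow> 2 * (C * 0)\<^sup>2 + 4 * K\<^sup>2 * 0"
    unfolding g_def by (intro tendsto_intros)
  then have g: "(g \<longlongrightarrow> 0) ?F"
    by (intro tendsto_mono[OF inf_le1]) simp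
  have "eventually (\<lambda>n. 0 \<le> integral\<^sup>L M (demeaning_error sig mu Y s n)
      \<and> integral\<^sup>L M (demeaning_error sig mu Y s n) \<le> g n) ?F"
    unfolding eventually_inf_principal eventually_sequentially
  proof (intro exI[of _ 1] allI impI)
    fix n :: nat assume n: "n \<ge> 1" and "n \<in> {n. \<exists>l::nat. real l = real n powr s \<and> l dvd n}"
    then obtain l :: nat where l: "real l = real n powr s" "l dvd n" by blast
    then have l1: "l \<ge> 1" and blk: "blk s n = l" using n by (auto simp: blk_def)
    have "real l / real n = real n powr (s - 1)"
      using l(1) n by (simp add: powr_diff)
    then have "C * real l / real n = C * real n powr (s - 1)"
      by (metis times_divide_eq_right)
    then have "integral\<^sup>L M (demeaning_error sig mu Y s n) \<le> g n"
      using integral_demeaning_error_le(2)[where sig=sig and mu=mu and s=s and K=K and C=C,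
          OF n l1 blk l(2) K lip]
      unfolding g_def blk by simp
    moreover have "0 \<le> integral\<^sup>L M (demeaning_error sig mu Y s n)"
      unfolding demeaning_error_def by (intro Bochner_Integration.integral_nonneg) (simp add: sum_nonneg)
    ultimately show "0 \<le> integral\<^sup>L M (demeaning_error sig mu Y s n)
        \<and> integral\<^sup>L M (demeaning_error sig mu Y s n) \<le> g n"
      by simp
  qed
  then have "eventually (\<lambda>n. 0 \<le> integral\<^sup>L M (demeaning_error sig mu Y s n)) ?F"
    and "eventually (\<lambda>n. integral\<^sup>L M (demeaning_error sig mu Y s n) \<le> g n) ?F"
    by (simp_all add: eventually_conj_iff)
  then show ?thesis
    by (rule tendsto_sandwich[OF _ _ tendsto_const g])
qed

lemma sigmaH2_tendsto_in_measure:
  assumes s: "0 < s" "s < 1" and mean0: "integral\<^sup>L M (Y 1) = 0" and beta: "beta_Y M Y \<longlonglongrightarrow> 0"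
    and cadlag: "cadlag01 sig" and K: "\<And>z. z \<in> {0..1} \<Longrightarrow> \<bar>sig z\<bar> \<le> K"
    and lip: "C-lipschitz_on {0..1} mu" and \<epsilon>: "\<epsilon> > 0"
  defines "I \<equiv> integral {0..1} (\<lambda>z. (sig z)\<^sup>2)"
  shows "((\<lambda>n. measure M {\<omega>\<in>space M. \<bar>sigmaH2 sig mu Y s n \<omega> - I\<bar> > \<epsilon>}) \<longlongrightarrow> 0)
    (sequentially \<sqinter> principal {n. \<exists>l::nat. real l = real n powr s \<and> l dvd n})"
proof (rule tendsto_measure_deviation_0[where T="sigma_known_trend sig Y"
      and V="demeaning_error sig mu Y s" and B="K\<^sup>2"])
  show "sigmaH2 sig mu Y s n \<in> borel_measurable M" for n
    unfolding sigmaH2_def demeaned_def obs_def Let_def using Y by measurable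
  show "eventually (\<lambda>n. integrable M (sigma_known_trend sig Y n)
      \<and> integrable M (\<lambda>\<omega>. (sigma_known_trend sig Y n \<omega> - I)\<^sup>2)
      \<and> integrable M (demeaning_error sig mu Y s n))
    (sequentially \<sqinter> principal {n. \<exists>l::nat. real l = real n powr s \<and> l dvd n})"
    unfolding eventually_inf_principal eventually_sequentially
  proof (intro exI[of _ 1] allI impI conjI)
    fix n :: nat assume n: "n \<ge> 1" and "n \<in> {n. \<exists>l::nat. real l = real n powr s \<and> l dvd n}"
    then obtain l :: nat where l: "real l = real n powr s" "l dvd n" by blast
    then have "l \<ge> 1" "blk s n = l" using n by (auto simp: blk_def)
    then show "integrable M (demeaning_error sig mu Y s n)"
      using integral_demeaning_error_le(1)[where sig=sig and mu=mu and s=s and K=K and C=C, OF n _ _ l(2) K lip]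
      by blast
    show "integrable M (sigma_known_trend sig Y n)"
      by (rule integral_sigma_known_trend(1))
    show "integrable M (\<lambda>\<omega>. (sigma_known_trend sig Y n \<omega> - I)\<^sup>2)"
      by (rule integral_sigma_known_trend_deviation_le(1)[where sig=sig and K=K and I=I, OF K])
  qed
  show "\<bar>sigmaH2 sig mu Y s n \<omega> - sigma_known_trend sig Y n \<omega>\<bar>
      \<le> \<eta> * sigma_known_trend sig Y n \<omega> + (1 + 1 / \<eta>) * demeaning_error sig mu Y s n \<omega>" if "\<eta> > 0" for n \<omega> \<eta>
    using abs_sigmaH2_sigma_known_trend_le[OF that] .
  show "integral\<^sup>L M (sigma_known_trend sig Y n) \<le> K\<^sup>2" for n
  proof -
    have "(sig (real i / real n))\<^sup>2 \<le> K\<^sup>2" if "i \<in> {1..n}" for i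
    proof -
      have "\<bar>sig (real i / real n)\<bar>\<^sup>2 \<le> K\<^sup>2" using K[of "real i / real n"] that by (intro power_mono) auto
      then show ?thesis by simp
    qed
    then have "(\<Sum>i = 1..n. (sig (real i / real n))\<^sup>2) \<le> real n * K\<^sup>2"
      using sum_mono[of "{1..n}" "\<lambda>i. (sig (real i / real n))\<^sup>2" "\<lambda>_. K\<^sup>2"] by simp
    then show ?thesis
      unfolding integral_sigma_known_trend(2) by (cases "n = 0") (simp_all add: pos_divide_le_eq mult.commute)
  qed
  show "((\<lambda>n. integral\<^sup>L M (\<lambda>\<omega>. (sigma_known_trend sig Y n \<omega> - I)\<^sup>2)) \<longlongrightarrow> 0)
      (sequentially \<sqinter> principal {n. \<exists>l::nat. real l = real n powr s \<and> l dvd n})"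
    using sigma_known_trend_L2_tendsto[OF cadlag K beta] unfolding I_def
    by (rule tendsto_mono[OF inf_le1])
  show "((\<lambda>n. integral\<^sup>L M (demeaning_error sig mu Y s n)) \<longlongrightarrow> 0)
      (sequentially \<sqinter> principal {n. \<exists>l::nat. real l = real n powr s \<and> l dvd n})"
    by (rule demeaning_error_tendsto_0[OF s mean0 beta K lip])
qed (rule \<epsilon>)

end

theorem lemmaA6:
  fixes M :: "'a measure" and Y :: "nat \<Rightarrow> 'a \<Rightarrow> real"
    and sig mu :: "real \<Rightarrow> real" and sigma0 s \<theta> :: real
  assumes "prob_space M"
    and meas: "\<And>i. Y i \<in> borel_measurable M"
    and stat: "strictly_stationary M Y"
    and mean0: "integral\<^sup>L M (Y 1) = 0"
    and var1: "integral\<^sup>L M (\<lambda>\<omega>. (Y 1 \<omega>)^2) = 1"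
    and abs_reg: "beta_Y M Y \<longlonglongrightarrow> 0"
    and lip: "\<exists>C. C-lipschitz_on {0..1} mu"
    and cadlag: "cadlag01 sig"
    and sigma0: "sigma0 > 0" "\<forall>z\<in>{0..1}. sig z \<ge> sigma0"
    and s: "0 < s" "s < 1"
    and theta: "\<theta> > 0"
    and A1: "integrable M (\<lambda>\<omega>. \<bar>Y 1 \<omega>\<bar> powr (4 + 2 * \<theta>))"
    and A2: "summable (\<lambda>k. beta_Y M Y (Suc k) powr (\<theta> / (2 + \<theta>)))"
  shows "\<forall>\<epsilon>>0. \<forall>\<delta>>0. \<exists>N. \<forall>n\<ge>N.
           (\<exists>l::nat. real l = real n powr s \<and> l dvd n) \<longrightarrow>
           measure M {\<omega>\<in>space M. \<bar>sigmaH2 sig mu Y s n \<omega> - integral {0..1} (\<lambda>z. (sig z)^2)\<bar> > \<epsilon>} < \<delta>"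
proof (intro allI impI)
  fix \<epsilon> \<delta> :: real assume \<epsilon>: "\<epsilon> > 0" and \<delta>: "\<delta> > 0"
  interpret prob_space M by fact
  have fourth_moment: "integrable M (\<lambda>\<omega>. (Y 1 \<omega>) ^ 4)"
  proof (rule Bochner_Integration.integrable_bound[of _ "\<lambda>\<omega>. 1 + \<bar>Y 1 \<omega>\<bar> powr (4 + 2 * \<theta>)"])
    show "AE \<omega> in M. norm ((Y 1 \<omega>) ^ 4) \<le> norm (1 + \<bar>Y 1 \<omega>\<bar> powr (4 + 2 * \<theta>))"
      using power4_le_one_plus_powr[OF theta] by simp
  qed (use A1 meas in simp_all)
  obtain K where K: "\<And>z. z \<in> {0..1} \<Longrightarrow> \<bar>sig z\<bar> \<le> K"
    using cadlag01_bounded[OF cadlag] by blast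
  obtain C where C: "C-lipschitz_on {0..1} mu" using lip ..
  have "eventually (\<lambda>n. measure M {\<omega>\<in>space M. \<bar>sigmaH2 sig mu Y s n \<omega> - integral {0..1} (\<lambda>z. (sig z)\<^sup>2)\<bar> > \<epsilon>} < \<delta>)
      (sequentially \<sqinter> principal {n. \<exists>l::nat. real l = real n powr s \<and> l dvd n})"
    using sigmaH2_tendsto_in_measure[OF \<open>prob_space M\<close> meas stat var1 fourth_moment s mean0 abs_reg cadlag K C \<epsilon>] \<delta>
    by (rule order_tendstoD(2))
  then show "\<exists>N. \<forall>n\<ge>N. (\<exists>l::nat. real l = real n powr s \<and> l dvd n) \<longrightarrow>
      measure M {\<omega>\<in>space M. \<bar>sigmaH2 sig mu Y s n \<omega> - integral {0..1} (\<lambda>z. (sig z)^2)\<bar> > \<epsilon>} < \<delta>"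
    unfolding eventually_inf_principal eventually_sequentially by simp
qed

end
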